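(* Let $\alpha=\frac{r}{s}+k\sqrt{p/q}$ be a positive irrational, where $r\in\mathbb Z$, $p,q,s\in\mathbb N$, $k\in\{-1,1\}$, $s$ even, $\gcd(r,s)=1$, $\gcd(p,q)=1$. Let $d_1=\gcd(ps^2-qr^2,2qs)$, $N=\frac{pqs^4}{d_1^2}$ and $M=\frac{4pqs^4}{d_1^2}$. For $A\in GL(2,\mathbb Z)$, $\pi(A)$ restricts to an isometric automorphism of $\mathcal A_\alpha$ if and only if $A=T^n$ for some $n\in\mathbb Z$, where $T$ is as follows: (1) if $d_1\mid qs$ and $x^2-Ny^2=-1$ has no integer solution, $T=\begin{bmatrix} -\frac{qrs}{d_1}y_1+x_1 & \frac{qs^2}{d_1}y_1\\ \frac{ps^2-qr^2}{d_1}y_1 & \frac{qrs}{d_1}y_1+x_1\end{bmatrix}$ with $(x_1,y_1)$ the fundamental solution of $x^2-Ny^2=1$; (2) if $d_1\mid qs$ and $x^2-Ny^2=-1$ has an integer solution, $T=\begin{bmatrix} -\frac{qrs}{d_1}ky_1'+x_1' & \frac{qs^2}{d_1}ky_1'\\ \frac{ps^2-qr^2}{d_1}ky_1' & \frac{qrs}{d_1}ky_1'+x_1'\end{bmatrix}$ with $(x_1',y_1')$ the fundamental solution of $x^2-Ny^2=-1$; (3) if $d_1\nmid qs$ and $x^2-My^2=-4$ has no integer solution, $T=\begin{bmatrix} -\frac{qrs}{d_1}y_1+\frac{x_1}{2} & \frac{qs^2}{d_1}y_1\\ \frac{ps^2-qr^2}{d_1}y_1 & \frac{qrs}{d_1}y_1+\frac{x_1}{2}\end{bmatrix}$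 with $(x_1,y_1)$ the fundamental solution of $x^2-My^2=4$; (4) if $d_1\nmid qs$ and $x^2-My^2=-4$ has an integer solution, $T=\begin{bmatrix} -\frac{qrs}{d_1}ky_1'+\frac{x_1'}{2} & \frac{qs^2}{d_1}ky_1'\\ \frac{ps^2-qr^2}{d_1}ky_1' & \frac{qrs}{d_1}ky_1'+\frac{x_1'}{2}\end{bmatrix}$ with $(x_1',y_1')$ the fundamental solution of $x^2-My^2=-4$. (In cases (1),(2), $N$ is a positive nonsquare integer; in cases (3),(4), $M$ is a positive nonsquare integer.)
   Context: For a positive irrational $\alpha$, $\mathcal A_\alpha=\{f\in C(\mathbb T^2): \hat f(m,n)=0 \text{ whenever } m+\alpha n<0\}$ ($\mathbb T$ the unit circle, $\hat f$ the Fourier transform on $\mathbb Z^2$), a uniform algebra with the sup norm. For $A=\begin{bmatrix} a&b\\ c&d\end{bmatrix}\in GL(2,\mathbb Z)$, $\pi(A)(f)=f\circ\varphi$ with $\varphi(z,w)=(z^aw^b,z^cw^d)$. For a positive nonsquare integer $N$ and $e\in\{1,-1,4,-4\}$, the fundamental solution of $x^2-Ny^2=e$ (when a solution in positive integers exists) is the solution $(x_1,y_1)$ in positive integers with $x_1$ smallest. *)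

theory Defs
  imports "HOL-Analysis.Analysis"
begin

definition torus :: "(complex \<times> complex) set" where
  "torus = {(z, w). cmod z = 1 \<and> cmod w = 1}"

definition fourier2 :: "(complex \<times> complex \<Rightarrow> complex) \<Rightarrow> int \<Rightarrow> int \<Rightarrow> complex" where
  "fourier2 f m n =
     integral (cbox ((0::real), (0::real)) (2 * pi, 2 * pi))
       (\<lambda>x. f (cis (fst x), cis (snd x)) * cis (- (of_int m * fst x + of_int n * snd x)))
     / (4 * of_real (pi ^ 2))"

definition A_alpha :: "real \<Rightarrow> (complex \<times> complex \<Rightarrow> complex) set" where
  "A_alpha \<alpha> = {f. f \<in> extensional torus \<and> continuous_on torus f \<and>
       (\<forall>m n. real_of_int m + \<alpha> * real_of_int n < 0 \<longrightarrow> fourier2 f m n = 0)}"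

definition sup_norm :: "(complex \<times> complex \<Rightarrow> complex) \<Rightarrow> real" where
  "sup_norm f = Sup ((\<lambda>x. cmod (f x)) ` torus)"

definition phiA :: "int^2^2 \<Rightarrow> complex \<times> complex \<Rightarrow> complex \<times> complex" where
  "phiA A = (\<lambda>(z, w). (z powi (A$1$1) * w powi (A$1$2), z powi (A$2$1) * w powi (A$2$2)))"

definition piA :: "int^2^2 \<Rightarrow> (complex \<times> complex \<Rightarrow> complex) \<Rightarrow> (complex \<times> complex \<Rightarrow> complex)" where
  "piA A f = restrict (f \<circ> phiA A) torus"

definition GL2Z :: "(int^2^2) set" where
  "GL2Z = {A. \<bar>det A\<bar> = 1}"

definition isometric_automorphism :: "real \<Rightarrow> int^2^2 \<Rightarrow> bool" where
  "isometric_automorphism \<alpha> A \<longleftrightarrow>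
     bij_betw (piA A) (A_alpha \<alpha>) (A_alpha \<alpha>) \<and>
     (\<forall>f\<in>A_alpha \<alpha>. sup_norm (piA A f) = sup_norm f)"

definition fundamental_solution :: "real \<Rightarrow> int \<Rightarrow> int \<Rightarrow> int \<Rightarrow> bool" where
  "fundamental_solution N e x y \<longleftrightarrow>
     x > 0 \<and> y > 0 \<and> real_of_int x ^ 2 - N * real_of_int y ^ 2 = of_int e \<and>
     (\<forall>x' y'. x' > 0 \<and> y' > 0 \<and> real_of_int x' ^ 2 - N * real_of_int y' ^ 2 = of_int e
        \<longrightarrow> x \<le> x')"

definition has_int_solution :: "real \<Rightarrow> int \<Rightarrow> bool" where
  "has_int_solution N e \<longleftrightarrow> (\<exists>x y::int. real_of_int x ^ 2 - N * real_of_int y ^ 2 = of_int e)"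

definition real_mat :: "int^2^2 \<Rightarrow> real^2^2" where
  "real_mat A = (\<chi> i j. real_of_int (A$i$j))"

primrec mat_pow :: "'a::semiring_1^'n^'n \<Rightarrow> nat \<Rightarrow> 'a^'n^'n" where
  "mat_pow T 0 = mat 1"
| "mat_pow T (Suc n) = T ** mat_pow T n"

text \<open>A = T^n for some integer n (negative powers via the inverse).\<close>
definition is_int_power :: "real^2^2 \<Rightarrow> real^2^2 \<Rightarrow> bool" where
  "is_int_power A T \<longleftrightarrow> (\<exists>n::nat. A = mat_pow T n \<or> A ** mat_pow T n = mat 1)"

definition Tmat :: "real \<Rightarrow> real \<Rightarrow> real \<Rightarrow> real \<Rightarrow> real \<Rightarrow> real \<Rightarrow> real \<Rightarrow> real^2^2" where
  "Tmat p q r s d1 u v =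
     vector [vector [- (q * r * s / d1) * u + v, (q * s ^ 2 / d1) * u],
             vector [((p * s ^ 2 - q * r ^ 2) / d1) * u, (q * r * s / d1) * u + v]]"

definition d1f :: "nat \<Rightarrow> nat \<Rightarrow> int \<Rightarrow> nat \<Rightarrow> int" where
  "d1f p q r s = gcd (int p * int s ^ 2 - int q * r ^ 2) (2 * int q * int s)"

end

theory Submission
  imports Defs
begin

text \<open>
  \<open>\<pi>(A)\<close> sends the character \<open>z^j w^l\<close> to \<open>z^(aj+cl) w^(bj+dl)\<close>, and \<open>\<phi>\<close> preserves
  Haar measure (true for trigonometric polynomials, hence for all continuous functions by
  Stone-Weierstrass), so \<open>\<pi>(A)\<close> just permutes Fourier coefficients by \<open>A^T\<close>. Thus \<open>\<pi>(A)\<close>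
  maps \<open>A_\<alpha>\<close> into itself iff \<open>A^T\<close> preserves the half-plane \<open>m + \<alpha> n \<ge> 0\<close>; by density
  of \<open>\<int> + \<alpha> \<int>\<close> this means that \<open>A (1, \<alpha>)^T\<close> is a positive multiple \<open>\<lambda>(A) (1, \<alpha>)^T\<close>.
  Isometry is then automatic.

  \<open>\<lambda>\<close> is an injective homomorphism into the positive reals with discrete image, so these
  matrices form an infinite cyclic group, generated by the one with least \<open>\<lambda> > 1\<close>. Such a
  matrix is \<open>Tmat \<dots> u v\<close> with \<open>u\<close> and \<open>2 v\<close> integers (\<open>v\<close> itself an integer when \<open>d1\<close>
  divides \<open>q s\<close>), \<open>\<lambda> = v + k u \<surd>N\<close> and \<open>det = v\<^sup>2 - N u\<^sup>2\<close>. So units with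
  \<open>\<lambda> > 1\<close> are positive solutions of \<open>x\<^sup>2 - N y\<^sup>2 = \<plusminus>1\<close> (of \<open>x\<^sup>2 - M y\<^sup>2 = \<plusminus>4\<close>, with
  \<open>x = 2 v\<close>), the generator comes from the fundamental solution, and it has determinant
  \<open>-1\<close> exactly when the equation with \<open>-1\<close> (\<open>-4\<close>) is solvable.
\<close>

section \<open>Integer matrices of determinant \<open>\<plusminus>1\<close>\<close>

lemma mat2_eq_iff:
  "(M :: 'a^2^2) = N \<longleftrightarrow> M$1$1 = N$1$1 \<and> M$1$2 = N$1$2 \<and> M$2$1 = N$2$1 \<and> M$2$2 = N$2$2"
  by (auto simp: vec_eq_iff forall_2)

lemma matrix_mult_2_nth:
  fixes M N :: "'a::semiring_1^2^2"
  shows "(M ** N) $1$1 = M$1$1 * N$1$1 + M$1$2 * N$2$1"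
    and "(M ** N) $1$2 = M$1$1 * N$1$2 + M$1$2 * N$2$2"
    and "(M ** N) $2$1 = M$2$1 * N$1$1 + M$2$2 * N$2$1"
    and "(M ** N) $2$2 = M$2$1 * N$1$2 + M$2$2 * N$2$2"
  by (simp_all add: matrix_matrix_mult_def sum_2)

lemma mat_one_2_nth:
  "(mat 1 :: 'a::zero_neq_one^2^2)$1$1 = 1" "(mat 1 :: 'a^2^2)$1$2 = 0"
  "(mat 1 :: 'a^2^2)$2$1 = 0" "(mat 1 :: 'a^2^2)$2$2 = 1"
  by (simp_all add: mat_def)

lemma GL2Z_det_cases: "A \<in> GL2Z \<Longrightarrow> det A = 1 \<or> det A = -1"
  by (auto simp: GL2Z_def abs_if split: if_splits)

lemma GL2Z_det_sq_2: "A \<in> GL2Z \<Longrightarrow> det A * (A$1$1 * A$2$2 - A$1$2 * A$2$1) = 1"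
  by (auto dest: GL2Z_det_cases simp: det_2)

lemma GL2Z_mult: "A \<in> GL2Z \<Longrightarrow> B \<in> GL2Z \<Longrightarrow> A ** B \<in> GL2Z"
  by (simp add: GL2Z_def det_mul abs_mult)

lemma mat_one_in_GL2Z: "mat 1 \<in> GL2Z"
  by (simp add: GL2Z_def)

text \<open>For \<open>det A = \<plusminus>1\<close> the inverse is \<open>det A\<close> times the adjugate.\<close>

definition gl_inverse :: "int^2^2 \<Rightarrow> int^2^2" where
  "gl_inverse A = (\<chi> i j. det A *
     (if i = 1 then (if j = 1 then A$2$2 else - A$1$2) else (if j = 1 then - A$2$1 else A$1$1)))"

lemma gl_inverse_nth:
  "gl_inverse A $1$1 = det A * A$2$2" "gl_inverse A $1$2 = - det A * A$1$2"
  "gl_inverse A $2$1 = - det A * A$2$1" "gl_inverse A $2$2 = det A * A$1$1"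
  by (simp_all add: gl_inverse_def)

lemma gl_inverse_right: "A \<in> GL2Z \<Longrightarrow> A ** gl_inverse A = mat 1"
  using GL2Z_det_sq_2[of A]
  by (simp add: mat2_eq_iff matrix_mult_2_nth gl_inverse_nth mat_one_2_nth algebra_simps)

lemma gl_inverse_left: "A \<in> GL2Z \<Longrightarrow> gl_inverse A ** A = mat 1"
  using GL2Z_det_sq_2[of A]
  by (simp add: mat2_eq_iff matrix_mult_2_nth gl_inverse_nth mat_one_2_nth algebra_simps)

lemma det_gl_inverse:
  assumes "A \<in> GL2Z"
  shows "det (gl_inverse A) = det A"
proof -
  have "det (gl_inverse A) = det A * (det A * (A$1$1 * A$2$2 - A$1$2 * A$2$1))"
    by (simp add: det_2 gl_inverse_nth algebra_simps)
  then show ?thesis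
    using GL2Z_det_sq_2[OF assms] by simp
qed

lemma gl_inverse_in_GL2Z: "A \<in> GL2Z \<Longrightarrow> gl_inverse A \<in> GL2Z"
  by (simp add: GL2Z_def det_gl_inverse)

lemma mat_pow_Suc_right: "mat_pow S n ** S = mat_pow S (Suc n)"
  by (induction n) (simp_all add: matrix_mul_assoc[symmetric])

lemma mat_pow_gl_inverse:
  assumes "T \<in> GL2Z"
  shows "mat_pow (gl_inverse T) m ** mat_pow T m = mat 1 \<and> mat_pow T m ** mat_pow (gl_inverse T) m = mat 1"
proof (induction m)
  case 0
  then show ?case
    by simp
next
  case (Suc m)
  have "mat_pow (gl_inverse T) (Suc m) ** mat_pow T (Suc m)
      = (gl_inverse T ** mat_pow (gl_inverse T) m) ** (mat_pow T m ** T)"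
    by (simp only: mat_pow_Suc_right mat_pow.simps)
  also have "\<dots> = gl_inverse T ** ((mat_pow (gl_inverse T) m ** mat_pow T m) ** T)"
    by (simp only: matrix_mul_assoc)
  finally have "mat_pow (gl_inverse T) (Suc m) ** mat_pow T (Suc m) = mat 1"
    using Suc gl_inverse_left[OF assms] by simp
  have "mat_pow T (Suc m) ** mat_pow (gl_inverse T) (Suc m)
      = (T ** mat_pow T m) ** (mat_pow (gl_inverse T) m ** gl_inverse T)"
    by (simp only: mat_pow_Suc_right mat_pow.simps)
  also have "\<dots> = T ** ((mat_pow T m ** mat_pow (gl_inverse T) m) ** gl_inverse T)"
    by (simp only: matrix_mul_assoc)
  finally have "mat_pow T (Suc m) ** mat_pow (gl_inverse T) (Suc m) = mat 1"
    using Suc gl_inverse_right[OF assms] by simp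
  with \<open>mat_pow (gl_inverse T) (Suc m) ** mat_pow T (Suc m) = mat 1\<close> show ?case ..
qed

section \<open>Integration on the torus\<close>

definition torus_char :: "int \<Rightarrow> int \<Rightarrow> complex \<times> complex \<Rightarrow> complex" where
  "torus_char j l x = fst x powi j * snd x powi l"

abbreviation period_square :: "(real \<times> real) set" where
  "period_square \<equiv> cbox (0, 0) (2 * pi, 2 * pi)"

definition torus_integral :: "(complex \<times> complex \<Rightarrow> complex) \<Rightarrow> complex" where
  "torus_integral G = integral period_square (\<lambda>t. G (cis (fst t), cis (snd t)))"

lemma integral_cis_int_multiple:
  "integral {0..2*pi} (\<lambda>t. cis (of_int j * t)) = (if j = 0 then complex_of_real (2*pi) else 0)"
proof (cases "j = 0")
  case True
  then show ?thesis by (simp add: scaleR_conv_of_real)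
next
  case False
  have "integral {0..2*pi} (\<lambda>t. exp ((\<i> * of_int j) * complex_of_real t)) =
        (exp ((\<i> * of_int j) * of_real (2*pi)) - 1) / (\<i> * of_int j)"
    by (rule integral_exp) (use False in auto)
  also have "exp ((\<i> * of_int j) * of_real (2*pi)) = cis (2 * pi * of_int j)"
    by (simp add: cis_conv_exp algebra_simps)
  also have "\<dots> = 1"
    by (rule cis_multiple_2pi) simp
  finally show ?thesis
    using False by (simp add: cis_conv_exp algebra_simps)
qed

lemma integral_cis_period_square:
  "integral period_square (\<lambda>t. cis (of_int j * fst t + of_int l * snd t))
     = (if j = 0 \<and> l = 0 then complex_of_real (4*pi^2) else 0)"
proof -
  have "continuous_on period_square (\<lambda>t. cis (of_int j * fst t + of_int l * snd t))"
    by (intro continuous_intros)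
  then have "integral period_square (\<lambda>t. cis (of_int j * fst t + of_int l * snd t))
      = integral (cbox 0 (2*pi)) (\<lambda>x. integral (cbox 0 (2*pi)) (\<lambda>y. cis (of_int j * x + of_int l * y)))"
    by (simp add: integral_prod_continuous)
  also have "\<dots> = integral {0..2*pi} (\<lambda>x. cis (of_int j * x)) * integral {0..2*pi} (\<lambda>y. cis (of_int l * y))"
    by (simp add: cis_mult[symmetric] integral_mult_left)
  also have "\<dots> = (if j = 0 \<and> l = 0 then complex_of_real (4*pi^2) else 0)"
    by (simp add: integral_cis_int_multiple power2_eq_square)
  finally show ?thesis .
qed

lemma cis_pair_in_torus: "(cis x, cis y) \<in> torus"
  by (simp add: torus_def)

lemma torus_nonzero: "x \<in> torus \<Longrightarrow> fst x \<noteq> 0 \<and> snd x \<noteq> 0"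
  by (auto simp: torus_def)

lemma compact_torus: "compact torus"
proof -
  have "torus = sphere 0 1 \<times> sphere 0 1"
    by (auto simp: torus_def)
  then show ?thesis
    by (metis compact_Times compact_sphere)
qed

lemma torus_char_cis: "torus_char j l (cis x, cis y) = cis (of_int j * x + of_int l * y)"
  by (simp add: torus_char_def cis_power_int cis_mult)

lemma torus_char_mult:
  "x \<in> torus \<Longrightarrow> torus_char j l x * torus_char j' l' x = torus_char (j + j') (l + l') x"
  by (auto dest: torus_nonzero simp: torus_char_def power_int_add)

lemma continuous_on_torus_char: "continuous_on torus (torus_char j l)"
proof -
  have "continuous_on torus (\<lambda>x. fst x powi j * snd x powi l)"
    using torus_nonzero by (intro continuous_intros) auto
  then show ?thesis
    by (simp add: torus_char_def[abs_def])
qed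

lemma torus_integral_char:
  "torus_integral (torus_char j l) = (if j = 0 \<and> l = 0 then complex_of_real (4*pi^2) else 0)"
  by (simp add: torus_integral_def torus_char_cis integral_cis_period_square)

lemma fourier2_eq_torus_integral:
  "fourier2 f m n = torus_integral (\<lambda>x. f x * torus_char (-m) (-n) x) / (4 * of_real (pi ^ 2))"
proof -
  have "\<And>t. cis (- (of_int m * fst t + of_int n * snd t)) = torus_char (-m) (-n) (cis (fst t), cis (snd t))"
    by (simp add: torus_char_cis algebra_simps)
  then show ?thesis
    by (simp add: fourier2_def torus_integral_def)
qed

lemma continuous_on_cis_pair:
  assumes "continuous_on torus f"
  shows "continuous_on S (\<lambda>t. f (cis (fst t), cis (snd t)))"
  by (rule continuous_on_compose2[OF assms]) (auto intro!: continuous_intros simp: cis_pair_in_torus)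

lemma torus_integrable:
  fixes f :: "complex \<times> complex \<Rightarrow> complex"
  assumes "continuous_on torus f"
  shows "(\<lambda>t. f (cis (fst t), cis (snd t))) integrable_on period_square"
  by (rule Henstock_Kurzweil_Integration.integrable_continuous) (rule continuous_on_cis_pair[OF assms])

lemma torus_integral_add:
  "continuous_on torus f \<Longrightarrow> continuous_on torus g \<Longrightarrow>
     torus_integral (\<lambda>x. f x + g x) = torus_integral f + torus_integral g"
  by (simp add: torus_integral_def integral_add torus_integrable)

lemma torus_integral_diff:
  "continuous_on torus f \<Longrightarrow> continuous_on torus g \<Longrightarrow>
     torus_integral (\<lambda>x. f x - g x) = torus_integral f - torus_integral g"
  by (simp add: torus_integral_def integral_diff torus_integrable)

lemma torus_integral_cmult: "torus_integral (\<lambda>x. c * f x) = c * torus_integral f"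
  by (simp add: torus_integral_def)

lemma torus_integral_cong:
  "(\<And>x. x \<in> torus \<Longrightarrow> f x = g x) \<Longrightarrow> torus_integral f = torus_integral g"
  by (simp add: torus_integral_def cis_pair_in_torus)

lemma norm_torus_integral_le:
  fixes f :: "complex \<times> complex \<Rightarrow> complex"
  assumes "continuous_on torus f" "\<And>x. x \<in> torus \<Longrightarrow> norm (f x) \<le> B"
  shows "norm (torus_integral f) \<le> B * 4 * pi ^ 2"
proof -
  have "0 \<le> B"
    using order_trans[OF norm_ge_zero assms(2)[of "(1, 1)"]] by (simp add: torus_def)
  have "norm (torus_integral f) \<le> B * Henstock_Kurzweil_Integration.content period_square"
    unfolding torus_integral_def
    by (rule has_integral_bound[OF \<open>0 \<le> B\<close> integrable_integral[OF torus_integrable[OF assms(1)]]])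
       (use assms(2) cis_pair_in_torus in auto)
  then show ?thesis
    by (simp add: content_Pair power2_eq_square)
qed

section \<open>Invariance of the torus integral under \<open>\<phi>\<close>\<close>

lemma phiA_apply:
  "phiA A x = (fst x powi (A$1$1) * snd x powi (A$1$2), fst x powi (A$2$1) * snd x powi (A$2$2))"
  by (cases x) (simp add: phiA_def)

lemma phiA_in_torus: "x \<in> torus \<Longrightarrow> phiA A x \<in> torus"
  by (auto simp: torus_def phiA_apply norm_mult norm_power_int)

lemma phiA_one: "phiA (mat 1) x = x"
  by (simp add: phiA_apply mat_def)

lemma phiA_phiA:
  assumes "x \<in> torus"
  shows "phiA A (phiA B x) = phiA (A ** B) x"
  using torus_nonzero[OF assms]
  by (simp add: phiA_apply matrix_matrix_mult_def sum_2 power_int_mult_distrib power_int_add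
      power_int_mult[symmetric] mult.commute mult.left_commute mult.assoc)

lemma torus_char_phiA:
  assumes "x \<in> torus"
  shows "torus_char j l (phiA A x) = torus_char (A$1$1 * j + A$2$1 * l) (A$1$2 * j + A$2$2 * l) x"
  using torus_nonzero[OF assms]
  by (simp add: torus_char_def phiA_apply power_int_mult_distrib power_int_add power_int_mult[symmetric]
      mult.commute mult.left_commute mult.assoc)

lemma continuous_on_phiA: "continuous_on torus (phiA A)"
proof -
  have "continuous_on torus
      (\<lambda>x. (fst x powi (A$1$1) * snd x powi (A$1$2), fst x powi (A$2$1) * snd x powi (A$2$2)))"
    using torus_nonzero by (intro continuous_intros) auto
  then show ?thesis
    by (simp add: phiA_apply[abs_def])
qed

lemma continuous_on_compose_phiA:
  "continuous_on torus F \<Longrightarrow> continuous_on torus (\<lambda>x. F (phiA A x))"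
  by (rule continuous_on_compose2[OF _ continuous_on_phiA]) (auto intro: phiA_in_torus)

text \<open>Functions that agree on the torus with a trigonometric polynomial; the last rule lets
  polynomials in the real coordinates qualify.\<close>

inductive trig_poly :: "(complex \<times> complex \<Rightarrow> complex) \<Rightarrow> bool" where
  char: "trig_poly (\<lambda>x. c * torus_char j l x)"
| add: "trig_poly f \<Longrightarrow> trig_poly g \<Longrightarrow> trig_poly (\<lambda>x. f x + g x)"
| torus_cong: "trig_poly f \<Longrightarrow> (\<And>x. x \<in> torus \<Longrightarrow> g x = f x) \<Longrightarrow> trig_poly g"

lemma continuous_on_trig_poly: "trig_poly f \<Longrightarrow> continuous_on torus f"
proof (induction rule: trig_poly.induct)
  case (char c j l)
  then show ?case
    by (intro continuous_intros continuous_on_torus_char)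
next
  case (add f g)
  show ?case
    using add.IH by (rule continuous_on_add)
next
  case (torus_cong f g)
  then show ?case
    by (metis continuous_on_eq)
qed

lemma trig_poly_const: "trig_poly (\<lambda>x. c)"
  using trig_poly.char[of c 0 0] by (simp add: torus_char_def)

lemma trig_poly_fst: "trig_poly fst"
  using trig_poly.char[of 1 1 0] by (simp add: torus_char_def)

lemma trig_poly_snd: "trig_poly snd"
  using trig_poly.char[of 1 0 1] by (simp add: torus_char_def)

lemma trig_poly_mult:
  assumes "trig_poly f" "trig_poly g"
  shows "trig_poly (\<lambda>x. f x * g x)"
  using assms(1)
proof (induction rule: trig_poly.induct)
  case (char c j l)
  from assms(2) show ?case
  proof (induction rule: trig_poly.induct)
    case (char c' j' l')
    show ?case
      by (rule trig_poly.torus_cong[OF trig_poly.char[of "c * c'" "j + j'" "l + l'"]])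
         (simp add: torus_char_mult[symmetric] mult_ac)
  next
    case (add g1 g2)
    then show ?case
      using trig_poly.add[OF add.IH] by (simp add: distrib_left)
  next
    case (torus_cong g1 g2)
    then show ?case
      by (intro trig_poly.torus_cong[OF torus_cong.IH]) simp
  qed
next
  case (add f1 f2)
  then show ?case
    using trig_poly.add[OF add.IH] by (simp add: distrib_right)
next
  case (torus_cong f1 f2)
  then show ?case
    by (intro trig_poly.torus_cong[OF torus_cong.IH]) simp
qed

lemma cnj_eq_inverse_if_norm_1:
  assumes "norm z = 1"
  shows "cnj z = inverse z"
proof -
  have "z * cnj z = 1"
    using complex_norm_square[of z] assms by simp
  then show ?thesis
    by (metis inverse_unique)
qed

lemma trig_poly_cnj: "trig_poly f \<Longrightarrow> trig_poly (\<lambda>x. cnj (f x))"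
proof (induction rule: trig_poly.induct)
  case (char c j l)
  have "cnj (c * torus_char j l x) = cnj c * torus_char (-j) (-l) x" if "x \<in> torus" for x
    using that
    by (cases x) (simp add: torus_def torus_char_def cnj_eq_inverse_if_norm_1 power_int_minus power_int_inverse)
  then show ?case
    by (rule trig_poly.torus_cong[OF trig_poly.char])
next
  case (add f g)
  then show ?case
    using trig_poly.add by simp
next
  case (torus_cong f g)
  then show ?case
    by (intro trig_poly.torus_cong[OF torus_cong.IH]) simp
qed

lemma trig_poly_Re: "trig_poly f \<Longrightarrow> trig_poly (\<lambda>x. of_real (Re (f x)))"
proof -
  assume "trig_poly f"
  then have "trig_poly (\<lambda>x. (1/2) * (f x + cnj (f x)))"
    by (intro trig_poly_mult trig_poly_const trig_poly.add trig_poly_cnj)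
  then show ?thesis
    by (simp add: complex_add_cnj)
qed

lemma trig_poly_Im: "trig_poly f \<Longrightarrow> trig_poly (\<lambda>x. of_real (Im (f x)))"
proof -
  assume "trig_poly f"
  then have "trig_poly (\<lambda>x. (1/(2*\<i>)) * (f x + (-1) * cnj (f x)))"
    by (intro trig_poly_mult trig_poly_const trig_poly.add trig_poly_cnj)
  moreover have "(1/(2*\<i>)) * (z + (-1) * cnj z) = of_real (Im z)" for z
    using complex_diff_cnj[of z] by (simp add: field_simps)
  ultimately show ?thesis
    by simp
qed

lemma bounded_linear_complex_pair_expand:
  fixes h :: "complex \<times> complex \<Rightarrow> real"
  assumes "bounded_linear h"
  shows "h x = Re (fst x) * h (1,0) + Im (fst x) * h (\<i>,0) + Re (snd x) * h (0,1) + Im (snd x) * h (0,\<i>)"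
proof -
  interpret linear h
    using assms by (rule bounded_linear.linear)
  have "x = Re (fst x) *\<^sub>R (1,0) + Im (fst x) *\<^sub>R (\<i>,0) + Re (snd x) *\<^sub>R (0,1) + Im (snd x) *\<^sub>R (0,\<i>)"
    by (cases x) (simp add: complex_eq_iff)
  then have "h x = h (Re (fst x) *\<^sub>R (1,0) + Im (fst x) *\<^sub>R (\<i>,0) + Re (snd x) *\<^sub>R (0,1) + Im (snd x) *\<^sub>R (0,\<i>))"
    by simp
  also have "\<dots> = Re (fst x) * h (1,0) + Im (fst x) * h (\<i>,0) + Re (snd x) * h (0,1) + Im (snd x) * h (0,\<i>)"
    by (simp only: add scale real_scaleR_def)
  finally show ?thesis .
qed

lemma trig_poly_real_polynomial_function:
  fixes h :: "complex \<times> complex \<Rightarrow> real"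
  assumes "real_polynomial_function h"
  shows "trig_poly (\<lambda>x. of_real (h x))"
  using assms
proof (induction rule: real_polynomial_function.induct)
  case (linear h)
  have "trig_poly (\<lambda>x. of_real (Re (fst x)) * of_real (h (1,0)) + of_real (Im (fst x)) * of_real (h (\<i>,0))
      + of_real (Re (snd x)) * of_real (h (0,1)) + of_real (Im (snd x)) * of_real (h (0,\<i>)))"
    by (intro trig_poly.add trig_poly_mult trig_poly_const trig_poly_Re trig_poly_Im trig_poly_fst trig_poly_snd)
  then show ?case
    by (subst bounded_linear_complex_pair_expand[OF linear]) simp
next
  case (const c)
  then show ?case
    by (rule trig_poly_const)
next
  case (add f g)
  then show ?case
    using trig_poly.add by simp
next
  case (mult f g)
  then show ?case
    using trig_poly_mult by simp
qed

lemma trig_poly_polynomial_function: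
  assumes "polynomial_function g"
  shows "trig_poly g"
proof -
  have "real_polynomial_function (Re \<circ> g)" "real_polynomial_function (Im \<circ> g)"
    using assms bounded_linear_Re bounded_linear_Im unfolding polynomial_function_def by blast+
  then have "trig_poly (\<lambda>x. of_real (Re (g x)) + \<i> * of_real (Im (g x)))"
    by (intro trig_poly.add trig_poly_mult trig_poly_const)
       (auto dest: trig_poly_real_polynomial_function simp: o_def)
  then show ?thesis
    by (simp add: complex_eq[symmetric])
qed

lemma phiA_exponent_eq_0_iff:
  fixes A :: "int^2^2"
  assumes "det A \<noteq> 0"
  shows "A$1$1 * j + A$2$1 * l = 0 \<and> A$1$2 * j + A$2$2 * l = 0 \<longleftrightarrow> j = 0 \<and> l = 0"
proof
  assume "A$1$1 * j + A$2$1 * l = 0 \<and> A$1$2 * j + A$2$2 * l = 0"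
  then have h1: "A$1$1 * j + A$2$1 * l = 0" and h2: "A$1$2 * j + A$2$2 * l = 0"
    by auto
  have "det A * j = A$2$2 * (A$1$1 * j + A$2$1 * l) - A$2$1 * (A$1$2 * j + A$2$2 * l)"
    and "det A * l = A$1$1 * (A$1$2 * j + A$2$2 * l) - A$1$2 * (A$1$1 * j + A$2$1 * l)"
    by (simp_all add: det_2 algebra_simps)
  then show "j = 0 \<and> l = 0"
    unfolding h1 h2 using assms by simp
qed simp

lemma torus_integral_phiA_trig_poly:
  assumes "det A \<noteq> 0" "trig_poly f"
  shows "torus_integral (\<lambda>x. f (phiA A x)) = torus_integral f"
  using assms(2)
proof (induction rule: trig_poly.induct)
  case (char c j l)
  have "torus_integral (\<lambda>x. c * torus_char j l (phiA A x))
      = torus_integral (\<lambda>x. c * torus_char (A$1$1 * j + A$2$1 * l) (A$1$2 * j + A$2$2 * l) x)"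
    by (rule torus_integral_cong) (simp add: torus_char_phiA)
  then show ?case
    by (simp add: torus_integral_cmult torus_integral_char phiA_exponent_eq_0_iff[OF assms(1)])
next
  case (add f g)
  have "continuous_on torus f" "continuous_on torus g"
    using add.hyps by (simp_all add: continuous_on_trig_poly)
  then show ?case
    using add.IH by (simp add: torus_integral_add continuous_on_compose_phiA)
next
  case (torus_cong f g)
  have "torus_integral (\<lambda>x. g (phiA A x)) = torus_integral (\<lambda>x. f (phiA A x))"
    by (rule torus_integral_cong) (simp add: torus_cong.hyps(2) phiA_in_torus)
  also have "\<dots> = torus_integral f"
    by (rule torus_cong.IH)
  also have "\<dots> = torus_integral g"
    by (rule torus_integral_cong) (simp add: torus_cong.hyps(2))
  finally show ?case .
qed

lemma torus_integral_phiA: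
  assumes "det A \<noteq> 0" "continuous_on torus F"
  shows "torus_integral (\<lambda>x. F (phiA A x)) = torus_integral F"
proof -
  let ?d = "torus_integral (\<lambda>x. F (phiA A x)) - torus_integral F"
  have bound: "norm ?d \<le> e * 8 * pi ^ 2" if "e > 0" for e
  proof -
    obtain g where g: "polynomial_function g" "\<forall>x\<in>torus. norm (F x - g x) < e"
      using Stone_Weierstrass_polynomial_function[OF compact_torus assms(2) \<open>e > 0\<close>] by blast
    have trig: "trig_poly g"
      using g(1) by (rule trig_poly_polynomial_function)
    have cont: "continuous_on torus g"
      using trig by (rule continuous_on_trig_poly)
    have "norm (torus_integral (\<lambda>x. F x - g x)) \<le> e * 4 * pi ^ 2"
      using g(2) by (intro norm_torus_integral_le continuous_intros assms(2) cont) (auto simp: less_imp_le)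
    moreover have "norm (torus_integral (\<lambda>x. F (phiA A x) - g (phiA A x))) \<le> e * 4 * pi ^ 2"
      using g(2) phiA_in_torus
      by (intro norm_torus_integral_le continuous_intros continuous_on_compose_phiA assms(2) cont)
         (auto simp: less_imp_le)
    moreover have "?d = torus_integral (\<lambda>x. F (phiA A x) - g (phiA A x)) - torus_integral (\<lambda>x. F x - g x)"
      using torus_integral_phiA_trig_poly[OF assms(1) trig]
      by (simp add: torus_integral_diff assms(2) cont continuous_on_compose_phiA)
    ultimately show ?thesis
      using norm_triangle_ineq4[of "torus_integral (\<lambda>x. F (phiA A x) - g (phiA A x))"
          "torus_integral (\<lambda>x. F x - g x)"] by simp
  qed
  have "norm ?d \<le> 0 + e" if "e > 0" for e
    using bound[of "e / (8 * pi ^ 2)"] that by simp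
  then have "norm ?d \<le> 0"
    by (rule field_le_epsilon)
  then show ?thesis
    by simp
qed

section \<open>Fourier coefficients and isometric automorphisms\<close>

lemma fourier2_torus_char:
  "fourier2 (restrict (torus_char j l) torus) m n = (if j = m \<and> l = n then 1 else 0)"
proof -
  have "torus_integral (\<lambda>x. restrict (torus_char j l) torus x * torus_char (-m) (-n) x)
      = torus_integral (torus_char (j - m) (l - n))"
    by (rule torus_integral_cong) (simp add: torus_char_mult)
  then show ?thesis
    by (simp add: fourier2_eq_torus_integral torus_integral_char)
qed

lemma fourier2_piA:
  assumes "det A \<noteq> 0" "continuous_on torus f"
  shows "fourier2 (piA A f) (A$1$1 * m + A$2$1 * n) (A$1$2 * m + A$2$2 * n) = fourier2 f m n"
proof -
  let ?G = "\<lambda>y. f y * torus_char (-m) (-n) y"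
  have "continuous_on torus ?G"
    using assms(2) continuous_on_torus_char by (rule continuous_on_mult)
  have "torus_integral (\<lambda>x. piA A f x * torus_char (- (A$1$1 * m + A$2$1 * n)) (- (A$1$2 * m + A$2$2 * n)) x)
      = torus_integral (\<lambda>x. ?G (phiA A x))"
    by (rule torus_integral_cong) (simp add: piA_def torus_char_phiA algebra_simps)
  also have "\<dots> = torus_integral ?G"
    using assms(1) \<open>continuous_on torus ?G\<close> by (rule torus_integral_phiA)
  finally show ?thesis
    by (simp add: fourier2_eq_torus_integral)
qed

lemma piA_torus_char:
  "piA A (restrict (torus_char j l) torus) = restrict (torus_char (A$1$1 * j + A$2$1 * l) (A$1$2 * j + A$2$2 * l)) torus"
  by (rule ext) (simp add: piA_def phiA_in_torus torus_char_phiA)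

lemma torus_char_in_A_alpha_iff:
  "restrict (torus_char j l) torus \<in> A_alpha \<alpha> \<longleftrightarrow> 0 \<le> real_of_int j + \<alpha> * real_of_int l"
proof
  assume "restrict (torus_char j l) torus \<in> A_alpha \<alpha>"
  then have "fourier2 (restrict (torus_char j l) torus) j l = 0" if "real_of_int j + \<alpha> * real_of_int l < 0"
    using that by (auto simp: A_alpha_def)
  then show "0 \<le> real_of_int j + \<alpha> * real_of_int l"
    by (force simp: fourier2_torus_char)
next
  assume "0 \<le> real_of_int j + \<alpha> * real_of_int l"
  moreover have "continuous_on torus (restrict (torus_char j l) torus)"
    using continuous_on_torus_char by (rule continuous_on_eq) simp
  ultimately show "restrict (torus_char j l) torus \<in> A_alpha \<alpha>"
    by (auto simp: A_alpha_def fourier2_torus_char)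
qed

lemma piA_piA: "piA B (piA A f) = piA (A ** B) f"
  by (rule ext) (simp add: piA_def phiA_in_torus phiA_phiA)

lemma piA_one: "f \<in> extensional torus \<Longrightarrow> piA (mat 1) f = f"
  by (simp add: piA_def phiA_one[abs_def] o_def extensional_restrict)

lemma phiA_image_torus:
  assumes "A \<in> GL2Z"
  shows "phiA A ` torus = torus"
proof
  show "phiA A ` torus \<subseteq> torus"
    using phiA_in_torus by auto
  show "torus \<subseteq> phiA A ` torus"
  proof
    fix y
    assume "y \<in> torus"
    then have "y = phiA A (phiA (gl_inverse A) y)"
      by (simp add: phiA_phiA gl_inverse_right[OF assms] phiA_one)
    then show "y \<in> phiA A ` torus"
      using phiA_in_torus[OF \<open>y \<in> torus\<close>] by blast
  qed
qed

lemma sup_norm_piA: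
  assumes "A \<in> GL2Z"
  shows "sup_norm (piA A f) = sup_norm f"
proof -
  have "(\<lambda>x. cmod (piA A f x)) ` torus = (\<lambda>y. cmod (f y)) ` (phiA A ` torus)"
    by (auto simp: piA_def image_image)
  then show ?thesis
    by (simp add: sup_norm_def phiA_image_torus[OF assms])
qed

lemma irrational_int_combination_eq_0:
  assumes "\<alpha> \<notin> \<rat>" "real_of_int x * \<alpha> + real_of_int y = 0"
  shows "x = 0 \<and> y = 0"
proof -
  have "x = 0"
  proof (rule ccontr)
    assume "x \<noteq> 0"
    then have "\<alpha> = - real_of_int y / real_of_int x"
      using assms(2) by (simp add: field_simps)
    then show False
      using assms(1) by simp
  qed
  then show ?thesis
    using assms(2) by simp
qed

lemma irrational_small_positive_combination:
  assumes "\<beta> \<notin> \<rat>" "\<delta> > 0"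
  obtains m n :: int where "n > 0" "0 < real_of_int m + real_of_int n * \<beta>" "real_of_int m + real_of_int n * \<beta> < \<delta>"
proof -
  obtain h k where "k > 0" "\<bar>of_int k * \<beta> - of_int h - \<delta>/2\<bar> < \<delta>/2"
    by (rule sequence_of_fractional_parts_is_dense[OF assms(1), where \<epsilon>="\<delta>/2" and \<alpha>="\<delta>/2"])
       (use assms(2) in auto)
  then have "0 < of_int k * \<beta> - of_int h" "of_int k * \<beta> - of_int h < \<delta>"
    by arith+
  then show ?thesis
    using that[where m="-h" and n=k] \<open>k > 0\<close> by (auto simp: algebra_simps)
qed

lemma lattice_point_near_line:
  assumes "\<alpha> \<notin> \<rat>" "\<delta> > 0" "D \<noteq> 0"
  obtains m n :: int where "D * real_of_int n \<le> - \<bar>D\<bar>"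
    and "0 < real_of_int m + \<alpha> * real_of_int n" "real_of_int m + \<alpha> * real_of_int n < \<delta>"
proof (cases "D < 0")
  case True
  obtain m n :: int where "n > 0" "0 < real_of_int m + real_of_int n * \<alpha>" "real_of_int m + real_of_int n * \<alpha> < \<delta>"
    using irrational_small_positive_combination[OF assms(1,2)] .
  moreover have "D * real_of_int n \<le> D * 1"
    using \<open>n > 0\<close> True by (intro mult_left_mono_neg) auto
  ultimately show ?thesis
    using that[where m=m and n=n] True by (simp add: mult.commute)
next
  case False
  have "- \<alpha> \<notin> \<rat>"
    using assms(1) by (metis Rats_minus_iff)
  then obtain m n :: int where "n > 0" "0 < real_of_int m + real_of_int n * - \<alpha>" "real_of_int m + real_of_int n * - \<alpha> < \<delta>"
    using irrational_small_positive_combination[OF _ assms(2)] by blast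
  moreover have "D * 1 \<le> D * real_of_int n"
    using \<open>n > 0\<close> False by (intro mult_left_mono) auto
  ultimately show ?thesis
    using that[where m=m and n="-n"] False assms(3) by (simp add: mult.commute)
qed

lemma lattice_half_plane_nonneg_form:
  fixes \<alpha> P Q :: real
  assumes "\<alpha> \<notin> \<rat>"
    and nonneg: "\<And>m n :: int. 0 \<le> real_of_int m + \<alpha> * real_of_int n \<Longrightarrow> 0 \<le> P * real_of_int m + Q * real_of_int n"
  shows "0 \<le> P \<and> Q = \<alpha> * P"
proof -
  have "0 \<le> P"
    using nonneg[of 1 0] by simp
  moreover have "Q = \<alpha> * P"
  proof (rule ccontr)
    define D where "D = Q - \<alpha> * P"
    assume "Q \<noteq> \<alpha> * P"
    then have "D \<noteq> 0"
      by (simp add: D_def)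
    then have "\<bar>D\<bar> / (P + 1) > 0"
      using \<open>0 \<le> P\<close> by simp
    then obtain m n :: int where mn: "D * real_of_int n \<le> - \<bar>D\<bar>"
      "0 < real_of_int m + \<alpha> * real_of_int n" "real_of_int m + \<alpha> * real_of_int n < \<bar>D\<bar> / (P + 1)"
      using lattice_point_near_line[OF assms(1) _ \<open>D \<noteq> 0\<close>] by blast
    have "P * (real_of_int m + \<alpha> * real_of_int n) \<le> P * (\<bar>D\<bar> / (P + 1))"
      using mn(3) \<open>0 \<le> P\<close> by (intro mult_left_mono) auto
    also have "\<dots> < \<bar>D\<bar>"
      using \<open>0 \<le> P\<close> \<open>D \<noteq> 0\<close> by (simp add: field_simps)
    finally have "P * real_of_int m + Q * real_of_int n < 0"
      using mn(1) by (simp add: D_def algebra_simps)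
    then show False
      using nonneg[of m n] mn(2) by simp
  qed
  ultimately show ?thesis ..
qed

definition ray_image :: "real \<Rightarrow> int^2^2 \<Rightarrow> 2 \<Rightarrow> real" where
  "ray_image \<alpha> A i = of_int (A$i$1) + \<alpha> * of_int (A$i$2)"

abbreviation ray_factor :: "real \<Rightarrow> int^2^2 \<Rightarrow> real" where
  "ray_factor \<alpha> A \<equiv> ray_image \<alpha> A 1"

definition preserves_ray :: "real \<Rightarrow> int^2^2 \<Rightarrow> bool" where
  "preserves_ray \<alpha> A \<longleftrightarrow> ray_image \<alpha> A 2 = \<alpha> * ray_factor \<alpha> A \<and> ray_factor \<alpha> A > 0"

lemma ray_image_mult:
  "ray_image \<alpha> (A ** B) i = of_int (A$i$1) * ray_image \<alpha> B 1 + of_int (A$i$2) * ray_image \<alpha> B 2"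
  using exhaust_2[of i] by (elim disjE) (simp_all add: ray_image_def matrix_mult_2_nth algebra_simps)

lemma ray_image_mult_preserves_ray:
  assumes "preserves_ray \<alpha> B"
  shows "ray_image \<alpha> (A ** B) i = ray_image \<alpha> A i * ray_factor \<alpha> B"
proof -
  have "ray_image \<alpha> (A ** B) i = of_int (A$i$1) * ray_factor \<alpha> B + of_int (A$i$2) * (\<alpha> * ray_factor \<alpha> B)"
    using assms by (simp add: ray_image_mult preserves_ray_def)
  also have "\<dots> = ray_image \<alpha> A i * ray_factor \<alpha> B"
    by (simp add: ray_image_def[of \<alpha> A] algebra_simps)
  finally show ?thesis .
qed

lemma ray_image_one: "ray_image \<alpha> (mat 1) 1 = 1" "ray_image \<alpha> (mat 1) 2 = \<alpha>"
  by (simp_all add: ray_image_def mat_one_2_nth)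

lemma ray_factor_exponent:
  assumes "preserves_ray \<alpha> A"
  shows "real_of_int (A$1$1 * m + A$2$1 * n) + \<alpha> * real_of_int (A$1$2 * m + A$2$2 * n)
       = ray_factor \<alpha> A * (real_of_int m + \<alpha> * real_of_int n)"
proof -
  have "real_of_int (A$1$1 * m + A$2$1 * n) + \<alpha> * real_of_int (A$1$2 * m + A$2$2 * n)
      = real_of_int m * ray_image \<alpha> A 1 + real_of_int n * ray_image \<alpha> A 2"
    by (simp add: ray_image_def algebra_simps)
  then show ?thesis
    using assms by (simp add: preserves_ray_def algebra_simps)
qed

lemma preserves_ray_mult:
  assumes "preserves_ray \<alpha> A" "preserves_ray \<alpha> B"
  shows "preserves_ray \<alpha> (A ** B) \<and> ray_factor \<alpha> (A ** B) = ray_factor \<alpha> A * ray_factor \<alpha> B"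
  using assms by (simp add: ray_image_mult_preserves_ray[OF assms(2)] preserves_ray_def)

lemma preserves_ray_one: "preserves_ray \<alpha> (mat 1)"
  by (simp add: preserves_ray_def ray_image_one)

lemma preserves_ray_gl_inverse:
  assumes "A \<in> GL2Z" "preserves_ray \<alpha> A"
  shows "preserves_ray \<alpha> (gl_inverse A) \<and> ray_factor \<alpha> (gl_inverse A) = 1 / ray_factor \<alpha> A"
proof -
  have "ray_image \<alpha> (mat 1) i = ray_image \<alpha> (gl_inverse A) i * ray_factor \<alpha> A" for i
    using ray_image_mult_preserves_ray[OF assms(2), of "gl_inverse A" i] gl_inverse_left[OF assms(1)] by simp
  from this[of 1] this[of 2] have "1 = ray_factor \<alpha> (gl_inverse A) * ray_factor \<alpha> A"
    and "\<alpha> = ray_image \<alpha> (gl_inverse A) 2 * ray_factor \<alpha> A"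
    by (simp_all add: ray_image_one)
  moreover have "ray_factor \<alpha> A > 0"
    using assms(2) by (simp add: preserves_ray_def)
  ultimately have "ray_factor \<alpha> (gl_inverse A) = 1 / ray_factor \<alpha> A"
    and "ray_image \<alpha> (gl_inverse A) 2 = \<alpha> / ray_factor \<alpha> A"
    by (simp_all add: field_simps)
  then show ?thesis
    using \<open>ray_factor \<alpha> A > 0\<close> by (simp add: preserves_ray_def)
qed

lemma preserves_ray_if_maps_A_alpha:
  assumes "\<alpha> \<notin> \<rat>" "A \<in> GL2Z" and maps: "\<And>f. f \<in> A_alpha \<alpha> \<Longrightarrow> piA A f \<in> A_alpha \<alpha>"
  shows "preserves_ray \<alpha> A"
proof -
  have "0 \<le> ray_factor \<alpha> A * real_of_int m + ray_image \<alpha> A 2 * real_of_int n"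
    if "0 \<le> real_of_int m + \<alpha> * real_of_int n" for m n :: int
  proof -
    have "restrict (torus_char (A$1$1 * m + A$2$1 * n) (A$1$2 * m + A$2$2 * n)) torus \<in> A_alpha \<alpha>"
      using maps[of "restrict (torus_char m n) torus"] that
      by (simp add: torus_char_in_A_alpha_iff piA_torus_char)
    then show ?thesis
      by (simp add: torus_char_in_A_alpha_iff ray_image_def algebra_simps)
  qed
  then have nonneg: "0 \<le> ray_factor \<alpha> A" and eigen: "ray_image \<alpha> A 2 = \<alpha> * ray_factor \<alpha> A"
    using lattice_half_plane_nonneg_form[OF assms(1)] by blast+
  have "ray_factor \<alpha> A \<noteq> 0"
  proof
    assume "ray_factor \<alpha> A = 0"
    then have "real_of_int (A$1$2) * \<alpha> + real_of_int (A$1$1) = 0"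
      and "real_of_int (A$2$2) * \<alpha> + real_of_int (A$2$1) = 0"
      using eigen by (simp_all add: ray_image_def algebra_simps)
    then have "A$1$2 = 0 \<and> A$1$1 = 0" "A$2$2 = 0 \<and> A$2$1 = 0"
      using irrational_int_combination_eq_0[OF assms(1)] by blast+
    then have "det A = 0"
      by (simp add: det_2)
    then show False
      using assms(2) by (simp add: GL2Z_def)
  qed
  then show ?thesis
    using nonneg eigen by (simp add: preserves_ray_def)
qed

lemma piA_in_A_alpha:
  assumes A: "A \<in> GL2Z" "preserves_ray \<alpha> A" and f: "f \<in> A_alpha \<alpha>"
  shows "piA A f \<in> A_alpha \<alpha>"
proof -
  have ext: "f \<in> extensional torus" and cont: "continuous_on torus f"
    and vanish: "\<And>m n. real_of_int m + \<alpha> * real_of_int n < 0 \<Longrightarrow> fourier2 f m n = 0"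
    using f by (auto simp: A_alpha_def)
  have cont': "continuous_on torus (piA A f)"
    using continuous_on_compose_phiA[OF cont] by (rule continuous_on_eq) (simp add: piA_def)
  moreover have "fourier2 (piA A f) j l = 0" if "real_of_int j + \<alpha> * real_of_int l < 0" for j l
  proof -
    let ?B = "gl_inverse A"
    have B: "det ?B \<noteq> 0" "preserves_ray \<alpha> ?B"
      using gl_inverse_in_GL2Z[OF A(1)] preserves_ray_gl_inverse[OF A] by (auto simp: GL2Z_def)
    have "fourier2 (piA A f) j l = fourier2 (piA ?B (piA A f)) (?B$1$1 * j + ?B$2$1 * l) (?B$1$2 * j + ?B$2$2 * l)"
      using fourier2_piA[OF B(1) cont'] by simp
    also have "piA ?B (piA A f) = f"
      using ext by (simp add: piA_piA gl_inverse_right[OF A(1)] piA_one)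
    also have "fourier2 f (?B$1$1 * j + ?B$2$1 * l) (?B$1$2 * j + ?B$2$2 * l) = 0"
      using vanish ray_factor_exponent[OF B(2), of j l] that B(2)
      by (simp add: preserves_ray_def mult_pos_neg)
    finally show ?thesis .
  qed
  ultimately show ?thesis
    by (simp add: A_alpha_def piA_def)
qed

theorem isometric_automorphism_iff_preserves_ray:
  assumes "\<alpha> \<notin> \<rat>" "A \<in> GL2Z"
  shows "isometric_automorphism \<alpha> A \<longleftrightarrow> preserves_ray \<alpha> A"
proof
  assume "isometric_automorphism \<alpha> A"
  then show "preserves_ray \<alpha> A"
    using preserves_ray_if_maps_A_alpha[OF assms]
    by (auto simp: isometric_automorphism_def bij_betw_def)
next
  assume ray: "preserves_ray \<alpha> A"
  let ?B = "gl_inverse A"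
  have inverse: "piA ?B (piA A f) = f" "piA A (piA ?B f) = f" if "f \<in> A_alpha \<alpha>" for f
    using that assms(2) by (simp_all add: piA_piA gl_inverse_right gl_inverse_left piA_one A_alpha_def)
  have "bij_betw (piA A) (A_alpha \<alpha>) (A_alpha \<alpha>)"
    by (rule bij_betw_byWitness[where f'="piA ?B"])
       (use inverse piA_in_A_alpha[OF assms(2) ray] piA_in_A_alpha[OF gl_inverse_in_GL2Z[OF assms(2)]]
          preserves_ray_gl_inverse[OF assms(2) ray] in auto)
  then show "isometric_automorphism \<alpha> A"
    by (simp add: isometric_automorphism_def sup_norm_piA[OF assms(2)])
qed

section \<open>The group of ray-preserving matrices is cyclic\<close>

lemma ray_factor_inj:
  assumes "\<alpha> \<notin> \<rat>" "preserves_ray \<alpha> A" "preserves_ray \<alpha> B" "ray_factor \<alpha> A = ray_factor \<alpha> B"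
  shows "A = B"
proof -
  have rows: "ray_image \<alpha> A i = ray_image \<alpha> B i" for i
    using assms(2-4) exhaust_2[of i] by (auto simp: preserves_ray_def)
  have "A$i$1 = B$i$1 \<and> A$i$2 = B$i$2" for i
    using irrational_int_combination_eq_0[OF assms(1), of "A$i$2 - B$i$2" "A$i$1 - B$i$1"] rows[of i]
    by (simp add: ray_image_def algebra_simps)
  then show ?thesis
    by (simp add: vec_eq_iff forall_2)
qed

lemma mat_pow_preserves_ray:
  assumes "S \<in> GL2Z" "preserves_ray \<alpha> S"
  shows "mat_pow S n \<in> GL2Z \<and> preserves_ray \<alpha> (mat_pow S n) \<and> ray_factor \<alpha> (mat_pow S n) = ray_factor \<alpha> S ^ n"
proof (induction n)
  case 0
  then show ?case
    by (simp add: mat_one_in_GL2Z preserves_ray_one ray_image_one)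
next
  case (Suc n)
  then show ?case
    using preserves_ray_mult[OF assms(2), of "mat_pow S n"] GL2Z_mult[OF assms(1)] by simp
qed

definition int_power_of :: "int^2^2 \<Rightarrow> int^2^2 \<Rightarrow> bool" where
  "int_power_of A T \<longleftrightarrow> (\<exists>n. A = mat_pow T n \<or> A ** mat_pow T n = mat 1)"

lemma int_power_of_if_inverse_powers:
  assumes inverse: "\<And>n. mat_pow U n ** mat_pow T n = mat 1" and "int_power_of A U"
  shows "int_power_of A T"
proof -
  obtain n where n: "A = mat_pow U n \<or> A ** mat_pow U n = mat 1"
    using assms(2) by (auto simp: int_power_of_def)
  then show ?thesis
  proof
    assume "A = mat_pow U n"
    then have "A ** mat_pow T n = mat 1"
      using inverse by simp
    then show ?thesis
      unfolding int_power_of_def by blast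
  next
    assume "A ** mat_pow U n = mat 1"
    have "A = A ** (mat_pow U n ** mat_pow T n)"
      by (simp add: inverse)
    also have "\<dots> = mat_pow T n"
      by (simp add: matrix_mul_assoc \<open>A ** mat_pow U n = mat 1\<close>)
    finally show ?thesis
      unfolding int_power_of_def by blast
  qed
qed

lemma int_power_of_gl_inverse_iff:
  assumes "T \<in> GL2Z"
  shows "int_power_of A (gl_inverse T) \<longleftrightarrow> int_power_of A T"
proof
  assume "int_power_of A (gl_inverse T)"
  then show "int_power_of A T"
    by (rule int_power_of_if_inverse_powers[rotated]) (use mat_pow_gl_inverse[OF assms] in blast)
next
  assume "int_power_of A T"
  then show "int_power_of A (gl_inverse T)"
    by (rule int_power_of_if_inverse_powers[rotated]) (use mat_pow_gl_inverse[OF assms] in blast)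
qed

lemma preserves_ray_if_int_power_of:
  assumes "T \<in> GL2Z" "preserves_ray \<alpha> T" "int_power_of A T"
  shows "preserves_ray \<alpha> A"
proof -
  obtain n where n: "A = mat_pow T n \<or> A ** mat_pow T n = mat 1"
    using assms(3) by (auto simp: int_power_of_def)
  have pow: "mat_pow T n \<in> GL2Z" "preserves_ray \<alpha> (mat_pow T n)"
    using mat_pow_preserves_ray[OF assms(1,2)] by auto
  show ?thesis
  proof (cases "A = mat_pow T n")
    case False
    then have "A ** mat_pow T n = mat 1"
      using n by simp
    have "A = A ** (mat_pow T n ** gl_inverse (mat_pow T n))"
      by (simp add: gl_inverse_right[OF pow(1)])
    also have "\<dots> = gl_inverse (mat_pow T n)"
      by (simp add: matrix_mul_assoc \<open>A ** mat_pow T n = mat 1\<close>)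
    finally have "A = gl_inverse (mat_pow T n)" .
    then show ?thesis
      using preserves_ray_gl_inverse[OF pow] by simp
  qed (use pow in simp)
qed

definition fundamental_ray_unit :: "real \<Rightarrow> int^2^2 \<Rightarrow> bool" where
  "fundamental_ray_unit \<alpha> S \<longleftrightarrow> S \<in> GL2Z \<and> preserves_ray \<alpha> S \<and> ray_factor \<alpha> S > 1 \<and>
     (\<forall>B. B \<in> GL2Z \<longrightarrow> preserves_ray \<alpha> B \<longrightarrow> ray_factor \<alpha> B > 1 \<longrightarrow> ray_factor \<alpha> S \<le> ray_factor \<alpha> B)"

lemma eq_one_if_ray_factor_below_fundamental:
  assumes "\<alpha> \<notin> \<rat>" "fundamental_ray_unit \<alpha> S" "A \<in> GL2Z" "preserves_ray \<alpha> A"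
    and "1 \<le> ray_factor \<alpha> A" "ray_factor \<alpha> A < ray_factor \<alpha> S"
  shows "A = mat 1"
proof -
  have "\<not> 1 < ray_factor \<alpha> A"
  proof
    assume "1 < ray_factor \<alpha> A"
    then have "ray_factor \<alpha> S \<le> ray_factor \<alpha> A"
      using assms(2-4) by (simp add: fundamental_ray_unit_def)
    then show False
      using assms(6) by simp
  qed
  then have "ray_factor \<alpha> A = 1"
    using assms(5) by simp
  then show ?thesis
    using ray_factor_inj[OF assms(1,4) preserves_ray_one] by (simp add: ray_image_one)
qed

lemma power_of_fundamental_if_ray_factor_ge_1:
  assumes "\<alpha> \<notin> \<rat>" and S: "fundamental_ray_unit \<alpha> S"
  shows "A \<in> GL2Z \<Longrightarrow> preserves_ray \<alpha> A \<Longrightarrow> 1 \<le> ray_factor \<alpha> A \<Longrightarrow> ray_factor \<alpha> A < ray_factor \<alpha> S ^ n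
    \<Longrightarrow> \<exists>m. A = mat_pow S m"
proof (induction n arbitrary: A)
  case 0
  then show ?case
    by simp
next
  case (Suc n)
  have SG: "S \<in> GL2Z" "preserves_ray \<alpha> S" and S1: "ray_factor \<alpha> S > 1"
    using S by (auto simp: fundamental_ray_unit_def)
  show ?case
  proof (cases "ray_factor \<alpha> A < ray_factor \<alpha> S")
    case True
    then have "A = mat_pow S 0"
      using eq_one_if_ray_factor_below_fundamental[OF assms Suc.prems(1-3)] by simp
    then show ?thesis ..
  next
    case False
    let ?A' = "A ** gl_inverse S"
    have pres: "preserves_ray \<alpha> ?A'" and factor: "ray_factor \<alpha> ?A' = ray_factor \<alpha> A / ray_factor \<alpha> S"
      using preserves_ray_mult[OF Suc.prems(2)] preserves_ray_gl_inverse[OF SG] by auto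
    have "?A' \<in> GL2Z"
      using GL2Z_mult[OF Suc.prems(1) gl_inverse_in_GL2Z[OF SG(1)]] .
    moreover have "1 \<le> ray_factor \<alpha> ?A'" "ray_factor \<alpha> ?A' < ray_factor \<alpha> S ^ n"
      using False S1 Suc.prems(4) by (simp_all add: factor field_simps)
    ultimately obtain m where "?A' = mat_pow S m"
      using Suc.IH[OF _ pres] by blast
    moreover have "A = ?A' ** S"
      by (simp add: matrix_mul_assoc[symmetric] gl_inverse_left[OF SG(1)])
    ultimately have "A = mat_pow S (Suc m)"
      by (simp add: mat_pow_Suc_right)
    then show ?thesis ..
  qed
qed

lemma int_power_of_fundamental_if_preserves_ray:
  assumes "\<alpha> \<notin> \<rat>" "fundamental_ray_unit \<alpha> S" "A \<in> GL2Z" "preserves_ray \<alpha> A"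
  shows "int_power_of A S"
proof -
  have SG: "S \<in> GL2Z" and S1: "ray_factor \<alpha> S > 1"
    using assms(2) by (auto simp: fundamental_ray_unit_def)
  have power: "\<exists>m. B = mat_pow S m" if "B \<in> GL2Z" "preserves_ray \<alpha> B" "1 \<le> ray_factor \<alpha> B" for B
  proof -
    obtain n where "ray_factor \<alpha> B < ray_factor \<alpha> S ^ n"
      using real_arch_pow[OF S1] by blast
    then show ?thesis
      using power_of_fundamental_if_ray_factor_ge_1[OF assms(1,2) that] by blast
  qed
  show ?thesis
  proof (cases "1 \<le> ray_factor \<alpha> A")
    case True
    then show ?thesis
      using power[OF assms(3,4)] by (auto simp: int_power_of_def)
  next
    case False
    have inv: "preserves_ray \<alpha> (gl_inverse A)" "ray_factor \<alpha> (gl_inverse A) = 1 / ray_factor \<alpha> A"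
      using preserves_ray_gl_inverse[OF assms(3,4)] by auto
    then have "1 \<le> ray_factor \<alpha> (gl_inverse A)"
      using False assms(4) by (simp add: preserves_ray_def)
    then obtain m where "gl_inverse A = mat_pow S m"
      using power[OF gl_inverse_in_GL2Z[OF assms(3)] inv(1)] by blast
    then show ?thesis
      using gl_inverse_right[OF assms(3)] by (auto simp: int_power_of_def)
  qed
qed

theorem preserves_ray_iff_int_power_of:
  assumes "\<alpha> \<notin> \<rat>" "T \<in> GL2Z" "preserves_ray \<alpha> T"
    and "fundamental_ray_unit \<alpha> T \<or> fundamental_ray_unit \<alpha> (gl_inverse T)" "A \<in> GL2Z"
  shows "preserves_ray \<alpha> A \<longleftrightarrow> int_power_of A T"
proof
  assume A: "preserves_ray \<alpha> A"
  from assms(4) show "int_power_of A T"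
  proof
    assume "fundamental_ray_unit \<alpha> T"
    then show ?thesis
      using int_power_of_fundamental_if_preserves_ray[OF assms(1) _ assms(5) A] by blast
  next
    assume "fundamental_ray_unit \<alpha> (gl_inverse T)"
    then have "int_power_of A (gl_inverse T)"
      using int_power_of_fundamental_if_preserves_ray[OF assms(1) _ assms(5) A] by blast
    then show ?thesis
      using int_power_of_gl_inverse_iff[OF assms(2)] by blast
  qed
next
  assume "int_power_of A T"
  then show "preserves_ray \<alpha> A"
    by (rule preserves_ray_if_int_power_of[OF assms(2,3)])
qed

lemma fundamental_ray_unit_if_least_with_det_minus_1:
  assumes T: "T \<in> GL2Z" "preserves_ray \<alpha> T" "det T = -1" "ray_factor \<alpha> T > 1"
    and least: "\<And>B. B \<in> GL2Z \<Longrightarrow> preserves_ray \<alpha> B \<Longrightarrow> ray_factor \<alpha> B > 1 \<Longrightarrow> det B = -1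
      \<Longrightarrow> ray_factor \<alpha> T \<le> ray_factor \<alpha> B"
  shows "fundamental_ray_unit \<alpha> T"
proof -
  have "ray_factor \<alpha> T \<le> ray_factor \<alpha> B" if B: "B \<in> GL2Z" "preserves_ray \<alpha> B" "ray_factor \<alpha> B > 1" for B
  proof (rule ccontr)
    assume less: "\<not> ray_factor \<alpha> T \<le> ray_factor \<alpha> B"
    then have "det B = 1"
      using GL2Z_det_cases[OF B(1)] least[OF B] by force
    let ?B' = "T ** gl_inverse B"
    have "?B' \<in> GL2Z" "preserves_ray \<alpha> ?B'" and factor: "ray_factor \<alpha> ?B' = ray_factor \<alpha> T / ray_factor \<alpha> B"
      using GL2Z_mult[OF T(1) gl_inverse_in_GL2Z[OF B(1)]] preserves_ray_mult[OF T(2)]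
        preserves_ray_gl_inverse[OF B(1,2)] by auto
    moreover have "det ?B' = -1"
      using T(3) \<open>det B = 1\<close> det_gl_inverse[OF B(1)] by (simp add: det_mul)
    moreover have "ray_factor \<alpha> ?B' > 1"
      using factor less B(3) by simp
    ultimately have "ray_factor \<alpha> T \<le> ray_factor \<alpha> T / ray_factor \<alpha> B"
      using least by metis
    then show False
      using B(3) T(4) by (simp add: field_simps)
  qed
  then show ?thesis
    using T by (simp add: fundamental_ray_unit_def)
qed

lemma real_mat_mult: "real_mat (A ** B) = real_mat A ** real_mat B"
  by (simp add: real_mat_def matrix_matrix_mult_def vec_eq_iff)

lemma real_mat_one: "real_mat (mat 1) = mat 1"
  by (simp add: real_mat_def mat_def vec_eq_iff)

lemma real_mat_inject: "real_mat A = real_mat B \<longleftrightarrow> A = B"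
  by (simp add: real_mat_def vec_eq_iff)

lemma real_mat_mat_pow: "mat_pow (real_mat T) n = real_mat (mat_pow T n)"
  by (induction n) (simp_all add: real_mat_one real_mat_mult)

lemma det_real_mat: "det (real_mat A) = real_of_int (det A)"
  by (simp add: det_2 real_mat_def)

lemma is_int_power_real_mat: "is_int_power (real_mat A) (real_mat T) \<longleftrightarrow> int_power_of A T"
  unfolding is_int_power_def int_power_of_def real_mat_mat_pow real_mat_mult[symmetric]
    real_mat_one[symmetric] real_mat_inject ..

theorem isometric_automorphism_iff_is_int_power:
  assumes "\<alpha> \<notin> \<rat>" "T \<in> GL2Z" "preserves_ray \<alpha> T"
    and "fundamental_ray_unit \<alpha> T \<or> fundamental_ray_unit \<alpha> (gl_inverse T)" "A \<in> GL2Z"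
  shows "isometric_automorphism \<alpha> A \<longleftrightarrow> is_int_power (real_mat A) (real_mat T)"
  using isometric_automorphism_iff_preserves_ray[OF assms(1,5)] preserves_ray_iff_int_power_of[OF assms]
  by (simp add: is_int_power_real_mat)

section \<open>Units from Pell equations\<close>

lemma Ints_if_add_diff_mult_Ints:
  fixes a d :: real
  assumes "a + d \<in> \<int>" "a - d \<in> \<int>" "a * d \<in> \<int>"
  shows "a \<in> \<int> \<and> d \<in> \<int>"
proof -
  obtain m n :: int where m: "a + d = of_int m" and n: "a - d = of_int n"
    using assms(1,2) by (metis Ints_cases)
  obtain t :: int where t: "a * d = of_int t"
    using assms(3) by (metis Ints_cases)
  have "4 * (a * d) = (a + d)^2 - (a - d)^2"
    by (simp add: power2_eq_square algebra_simps)
  then have "real_of_int (4 * t) = real_of_int ((m + n) * (m - n))"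
    using m n t by (simp add: power2_eq_square algebra_simps)
  then have prod: "4 * t = (m + n) * (m - n)"
    by (simp only: of_int_eq_iff)
  have "even (m + n)"
  proof (rule ccontr)
    assume odd: "odd (m + n)"
    have "m - n = (m + n) - 2 * n"
      by simp
    then have "odd (m - n)"
      using odd by (metis even_diff even_mult_iff even_numeral)
    then show False
      using odd prod by (metis even_mult_iff even_numeral)
  qed
  then obtain w where "m + n = 2 * w"
    by blast
  then have "a = of_int w" "d = of_int (m - w)"
    using m n by (simp_all add: algebra_simps)
  then show ?thesis
    by simp
qed

lemma fundamental_solution_le:
  assumes "M > 0" "fundamental_solution M e x1 y1"
    and "X > 0" "Y > 0" "real_of_int X ^ 2 - M * real_of_int Y ^ 2 = of_int e"
  shows "real_of_int x1 + real_of_int y1 * sqrt M \<le> real_of_int X + real_of_int Y * sqrt M"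
proof -
  have sol: "real_of_int x1 ^ 2 - M * real_of_int y1 ^ 2 = of_int e" and "x1 > 0"
    and least: "\<And>x' y'. x' > 0 \<Longrightarrow> y' > 0 \<Longrightarrow> real_of_int x' ^ 2 - M * real_of_int y' ^ 2 = of_int e \<Longrightarrow> x1 \<le> x'"
    using assms(2) unfolding fundamental_solution_def by auto
  have x: "real_of_int x1 \<le> real_of_int X"
    using least[OF assms(3-5)] by simp
  then have "real_of_int x1 ^ 2 \<le> real_of_int X ^ 2"
    using \<open>x1 > 0\<close> by (intro power_mono) simp_all
  then have "M * real_of_int y1 ^ 2 \<le> M * real_of_int Y ^ 2"
    using sol assms(5) by linarith
  then have "real_of_int y1 ^ 2 \<le> real_of_int Y ^ 2"
    using assms(1) by simp
  then have "real_of_int y1 \<le> real_of_int Y"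
    by (rule power2_le_imp_le) (use assms(4) in simp)
  then have "real_of_int y1 * sqrt M \<le> real_of_int Y * sqrt M"
    by (rule mult_right_mono) (use assms(1) in simp)
  then show ?thesis
    using x by linarith
qed

lemma pell_unit_gt_1:
  fixes x y :: int and M h :: real
  assumes "M > 0" "x > 0" "y > 0" "h > 0" "\<bar>real_of_int x ^ 2 - M * real_of_int y ^ 2\<bar> = h ^ 2"
  shows "(real_of_int x + real_of_int y * sqrt M) / h > 1"
proof -
  let ?\<epsilon> = "real_of_int x + real_of_int y * sqrt M" and ?\<epsilon>' = "real_of_int x - real_of_int y * sqrt M"
  have "real_of_int y * sqrt M > 0"
    using assms(1,3) by simp
  then have less: "\<bar>?\<epsilon>'\<bar> < ?\<epsilon>" and pos: "?\<epsilon> > 0"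
    using assms(2) by linarith+
  have "?\<epsilon> * ?\<epsilon>' = real_of_int x ^ 2 - M * real_of_int y ^ 2"
    using assms(1) by (simp add: power2_eq_square algebra_simps)
  then have "?\<epsilon> * \<bar>?\<epsilon>'\<bar> = h ^ 2"
    using assms(5) pos by (metis abs_mult abs_of_pos)
  moreover have "?\<epsilon> * \<bar>?\<epsilon>'\<bar> < ?\<epsilon> ^ 2"
    using less pos by (simp add: power2_eq_square)
  ultimately have "h ^ 2 < ?\<epsilon> ^ 2"
    by simp
  then have "h < ?\<epsilon>"
    by (rule power2_less_imp_less) (use pos in simp)
  then show ?thesis
    using assms(4) by simp
qed

lemma pell_conjugate_unit:
  fixes x y :: int and M h :: real
  assumes "M > 0" "x > 0" "y > 0" "h > 0" "real_of_int x ^ 2 - M * real_of_int y ^ 2 = h ^ 2"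
  shows "(real_of_int x - real_of_int y * sqrt M) / h = 1 / ((real_of_int x + real_of_int y * sqrt M) / h)"
proof -
  have "(real_of_int x + real_of_int y * sqrt M) * (real_of_int x - real_of_int y * sqrt M) = h * h"
    using assms(1,5) by (simp add: power2_eq_square algebra_simps)
  moreover have "real_of_int x + real_of_int y * sqrt M > 0"
    using assms(1-3) by (simp add: add_pos_pos)
  ultimately show ?thesis
    using assms(4) by (simp add: field_simps)
qed

definition int_of_mat :: "real^2^2 \<Rightarrow> int^2^2" where
  "int_of_mat T = (\<chi> i j. \<lfloor>T$i$j\<rfloor>)"

lemma real_mat_int_of_mat: "(\<And>i j. T$i$j \<in> \<int>) \<Longrightarrow> real_mat (int_of_mat T) = T"
  by (simp add: real_mat_def int_of_mat_def vec_eq_iff)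

lemma Tmat_nth:
  "Tmat p q r s d u v $1$1 = - (q * r * s / d) * u + v"
  "Tmat p q r s d u v $1$2 = (q * s ^ 2 / d) * u"
  "Tmat p q r s d u v $2$1 = ((p * s ^ 2 - q * r ^ 2) / d) * u"
  "Tmat p q r s d u v $2$2 = (q * r * s / d) * u + v"
  by (simp_all add: Tmat_def)

locale quadratic_alpha =
  fixes r k :: int and p q s :: nat and \<alpha> :: real
  assumes alpha_def: "\<alpha> = real_of_int r / real s + real_of_int k * sqrt (real p / real q)"
    and alpha_irr: "\<alpha> \<notin> \<rat>"
    and k: "k \<in> {-1, 1}" and s_pos: "s > 0" and q_pos: "q > 0" and s_even: "even s"
    and cop_rs: "gcd r (int s) = 1"
begin

definition "d1 = d1f p q r s"
definition "N = real p * real q * real s ^ 4 / real_of_int d1 ^ 2"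
definition "\<kappa> = sqrt (real p / real q)"
definition "\<rho> = real q * real s ^ 2 * \<kappa> / real_of_int d1"

abbreviation "Tm \<equiv> Tmat (real p) (real q) (real_of_int r) (real s) (real_of_int d1)"

lemma k_square: "real_of_int k * real_of_int k = 1"
  using k by auto

lemma p_pos: "p > 0"
proof (rule ccontr)
  assume "\<not> p > 0"
  then have "\<alpha> = real_of_int r / real s"
    using alpha_def by simp
  then show False
    using alpha_irr by (metis Rats_divide Rats_of_int Rats_of_nat)
qed

lemma d1_pos: "d1 > 0"
  using q_pos s_pos by (simp add: d1_def d1f_def)

lemma d1_real_pos: "real_of_int d1 > 0"
  using d1_pos by simp

lemma d1_dvd_2qs: "d1 dvd 2 * int q * int s"
  by (simp add: d1_def d1f_def)

lemma d1_dvd_ps2_qr2: "d1 dvd int p * int s ^ 2 - int q * r ^ 2"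
  by (simp add: d1_def d1f_def)

lemma d1_dvd_qs2: "d1 dvd int q * int s ^ 2"
proof -
  obtain s' where "int s = 2 * s'"
    using s_even by (metis even_of_nat evenE)
  then have "int q * int s ^ 2 = (2 * int q * int s) * s'"
    by (simp add: power2_eq_square algebra_simps)
  then show ?thesis
    using d1_dvd_2qs by (metis dvd_mult2)
qed

lemma kappa_pos: "\<kappa> > 0"
  using p_pos q_pos by (simp add: \<kappa>_def)

lemma kappa_square: "\<kappa> * \<kappa> = real p / real q"
  by (simp add: \<kappa>_def)

lemma rho_pos: "\<rho> > 0"
  using q_pos s_pos kappa_pos d1_real_pos by (simp add: \<rho>_def)

lemma rho_square: "\<rho> * \<rho> = N"
proof -
  have "\<rho> * \<rho> = (real q * real s ^ 2 / real_of_int d1)^2 * (\<kappa> * \<kappa>)"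
    by (simp add: \<rho>_def power2_eq_square)
  also have "\<dots> = N"
    using q_pos by (simp add: kappa_square N_def power2_eq_square power4_eq_xxxx field_simps)
  finally show ?thesis .
qed

lemma N_pos: "N > 0"
  using rho_square rho_pos by (metis zero_less_mult_iff)

lemma sqrt_N: "sqrt N = \<rho>"
  by (rule real_sqrt_unique) (use rho_square rho_pos in \<open>auto simp: power2_eq_square\<close>)

lemma alpha_quadratic:
  "real q * real s ^ 2 * \<alpha>^2 - 2 * real q * real_of_int r * real s * \<alpha>
     + real q * real_of_int r ^ 2 - real p * real s ^ 2 = 0"
proof -
  have "(\<alpha> - real_of_int r / real s)^2 = (real_of_int k * \<kappa>)^2"
    by (simp add: alpha_def \<kappa>_def)
  also have "\<dots> = real p / real q"
    using k_square kappa_square by (simp add: power2_eq_square algebra_simps)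
  finally show ?thesis
    using s_pos q_pos by (simp add: field_simps power2_eq_square)
qed

lemma preserves_ray_entries:
  assumes "preserves_ray \<alpha> B"
  shows "int s * (B$1$1 - B$2$2) = - 2 * r * B$1$2"
    and "B$1$2 * (int p * int s ^ 2 - int q * r ^ 2) = B$2$1 * int q * int s ^ 2"
proof -
  define a b c d where "a = B$1$1" "b = B$1$2" "c = B$2$1" "d = B$2$2"
  have eigen: "real_of_int c + \<alpha> * real_of_int d = \<alpha> * (real_of_int a + \<alpha> * real_of_int b)"
    using assms by (simp add: preserves_ray_def ray_image_def a_b_c_d_def)
  have "real_of_int (2 * int q * r * int s * b + (a - d) * int q * int s ^ 2) * \<alpha>
      + real_of_int (b * (int p * int s ^ 2 - int q * r ^ 2) - c * int q * int s ^ 2)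
    = - real_of_int b * (real q * real s ^ 2 * \<alpha>^2 - 2 * real q * real_of_int r * real s * \<alpha>
        + real q * real_of_int r ^ 2 - real p * real s ^ 2)
      + real q * real s ^ 2 * (\<alpha> * (real_of_int a + \<alpha> * real_of_int b) - (real_of_int c + \<alpha> * real_of_int d))"
    by (simp add: algebra_simps power2_eq_square)
  also have "\<dots> = 0"
    using alpha_quadratic eigen by simp
  finally have "2 * int q * r * int s * b + (a - d) * int q * int s ^ 2 = 0"
    and "b * (int p * int s ^ 2 - int q * r ^ 2) - c * int q * int s ^ 2 = 0"
    using irrational_int_combination_eq_0[OF alpha_irr] by blast+
  then have "int q * int s * (2 * r * b + int s * (a - d)) = 0"
    and entries_2: "b * (int p * int s ^ 2 - int q * r ^ 2) = c * int q * int s ^ 2"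
    by (simp_all add: algebra_simps power2_eq_square)
  moreover have "int q * int s \<noteq> 0"
    using q_pos s_pos by simp
  ultimately have "2 * r * b + int s * (a - d) = 0"
    by simp
  then show "int s * (B$1$1 - B$2$2) = - 2 * r * B$1$2"
    by (simp add: a_b_c_d_def algebra_simps)
  show "B$1$2 * (int p * int s ^ 2 - int q * r ^ 2) = B$2$1 * int q * int s ^ 2"
    using entries_2 by (simp add: a_b_c_d_def)
qed

lemma det_Tm: "det (Tm u v) = v^2 - N * u^2"
  using d1_real_pos q_pos s_pos
  by (simp add: det_2 Tmat_nth N_def power2_eq_square power4_eq_xxxx field_simps)

lemma ray_factor_Tm: "Tm u v $1$1 + \<alpha> * Tm u v $1$2 = v + real_of_int k * u * \<rho>"
proof -
  define Q where "Q = real q * real s ^ 2 / real_of_int d1"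
  have "\<alpha> = real_of_int r / real s + real_of_int k * \<kappa>"
    by (simp add: alpha_def \<kappa>_def)
  then have "Tm u v $1$1 + \<alpha> * Tm u v $1$2 = v - real q * real_of_int r * real s / real_of_int d1 * u
      + real_of_int r / real s * (Q * u) + real_of_int k * u * (\<kappa> * Q)"
    by (simp add: Tmat_nth Q_def[symmetric] algebra_simps)
  also have "real_of_int r / real s * (Q * u) = real q * real_of_int r * real s / real_of_int d1 * u"
    using s_pos by (simp add: Q_def power2_eq_square field_simps)
  also have "\<kappa> * Q = \<rho>"
    by (simp add: \<rho>_def Q_def)
  finally show ?thesis
    by simp
qed

lemma ray_image_2_Tm: "Tm u v $2$1 + \<alpha> * Tm u v $2$2 = \<alpha> * (Tm u v $1$1 + \<alpha> * Tm u v $1$2)"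
proof -
  have "Tm u v $2$1 + \<alpha> * Tm u v $2$2 - \<alpha> * (Tm u v $1$1 + \<alpha> * Tm u v $1$2)
     = - (u / real_of_int d1) * (real q * real s ^ 2 * \<alpha>^2 - 2 * real q * real_of_int r * real s * \<alpha>
          + real q * real_of_int r ^ 2 - real p * real s ^ 2)"
    using d1_real_pos by (simp add: Tmat_nth power2_eq_square field_simps)
  then show ?thesis
    using alpha_quadratic by simp
qed

lemma Tm_Ints:
  assumes "2 * v \<in> \<int>" "v^2 - N * real_of_int u^2 \<in> \<int>"
  shows "Tm (real_of_int u) v $i$j \<in> \<int>"
proof -
  let ?T = "Tm (real_of_int u) v"
  obtain c1 where c1: "int q * int s ^ 2 = d1 * c1"
    using d1_dvd_qs2 by blast
  obtain c2 where c2: "int p * int s ^ 2 - int q * r ^ 2 = d1 * c2"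
    using d1_dvd_ps2_qr2 by blast
  obtain c3 where c3: "2 * int q * int s = d1 * c3"
    using d1_dvd_2qs by blast
  have b: "?T $1$2 = of_int (c1 * u)"
    using arg_cong[OF c1, of real_of_int] d1_real_pos by (simp add: Tmat_nth)
  have c: "?T $2$1 = of_int (c2 * u)"
    using arg_cong[OF c2, of real_of_int] d1_real_pos by (simp add: Tmat_nth)
  have "2 * (real q * real_of_int r * real s / real_of_int d1) = real_of_int r * of_int c3"
    using arg_cong[OF c3, of real_of_int] d1_real_pos by (simp add: field_simps)
  moreover have "?T $1$1 - ?T $2$2 = - (2 * (real q * real_of_int r * real s / real_of_int d1)) * real_of_int u"
    by (simp add: Tmat_nth algebra_simps)
  ultimately have "?T $1$1 - ?T $2$2 \<in> \<int>"
    by simp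
  moreover have "?T $1$1 + ?T $2$2 = 2 * v"
    by (simp add: Tmat_nth)
  moreover have "?T $1$1 * ?T $2$2 = det ?T + ?T $1$2 * ?T $2$1"
    by (simp add: det_2)
  then have "?T $1$1 * ?T $2$2 \<in> \<int>"
    using assms(2) b c by (simp add: det_Tm)
  ultimately have "?T $1$1 \<in> \<int> \<and> ?T $2$2 \<in> \<int>"
    using Ints_if_add_diff_mult_Ints assms(1) by metis
  then show ?thesis
    using b c exhaust_2[of i] exhaust_2[of j] by auto
qed

definition tmat_u :: "int^2^2 \<Rightarrow> real" where
  "tmat_u B = real_of_int (B$1$2) * real_of_int d1 / (real q * real s ^ 2)"

definition tmat_v :: "int^2^2 \<Rightarrow> real" where
  "tmat_v B = (real_of_int (B$1$1) + real_of_int (B$2$2)) / 2"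

lemma real_mat_eq_Tm:
  assumes "preserves_ray \<alpha> B"
  shows "real_mat B = Tm (tmat_u B) (tmat_v B)"
proof -
  let ?a = "real_of_int (B$1$1)" and ?b = "real_of_int (B$1$2)"
    and ?c = "real_of_int (B$2$1)" and ?d = "real_of_int (B$2$2)"
  have diag: "real s * (?a - ?d) = - 2 * real_of_int r * ?b"
    using arg_cong[OF preserves_ray_entries(1)[OF assms], of real_of_int] by simp
  have off: "?b * (real p * real s ^ 2 - real q * real_of_int r ^ 2) = ?c * real q * real s ^ 2"
    using arg_cong[OF preserves_ray_entries(2)[OF assms], of real_of_int] by simp
  have u: "real q * real s ^ 2 / real_of_int d1 * tmat_u B = ?b"
    using q_pos s_pos d1_real_pos by (simp add: tmat_u_def)
  have w: "real q * real_of_int r * real s / real_of_int d1 * tmat_u B = real_of_int r * ?b / real s"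
    unfolding u[symmetric] using s_pos by (simp add: power2_eq_square field_simps)
  have "Tm (tmat_u B) (tmat_v B) $1$1 = tmat_v B - real_of_int r * ?b / real s"
    and "Tm (tmat_u B) (tmat_v B) $2$2 = tmat_v B + real_of_int r * ?b / real s"
    by (simp_all only: Tmat_nth mult_minus_left w)
  moreover have "tmat_v B - real_of_int r * ?b / real s = ?a" "tmat_v B + real_of_int r * ?b / real s = ?d"
    using diag s_pos by (simp_all add: tmat_v_def field_simps)
  ultimately have "Tm (tmat_u B) (tmat_v B) $1$1 = ?a" "Tm (tmat_u B) (tmat_v B) $2$2 = ?d"
    by simp_all
  moreover have "Tm (tmat_u B) (tmat_v B) $2$1 = ?c"
    using off q_pos s_pos d1_real_pos by (simp add: Tmat_nth tmat_u_def field_simps)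
  ultimately show ?thesis
    using u by (simp add: mat2_eq_iff real_mat_def Tmat_nth)
qed

lemma ray_factor_det_tmat:
  assumes "preserves_ray \<alpha> B"
  shows "ray_factor \<alpha> B = tmat_v B + real_of_int k * tmat_u B * \<rho>"
    and "real_of_int (det B) = tmat_v B ^ 2 - N * tmat_u B ^ 2"
proof -
  have "real_of_int (B$i$j) = Tm (tmat_u B) (tmat_v B) $i$j" for i j
    using arg_cong[OF real_mat_eq_Tm[OF assms], of "\<lambda>M. M$i$j"] by (simp add: real_mat_def)
  then show "ray_factor \<alpha> B = tmat_v B + real_of_int k * tmat_u B * \<rho>"
    by (simp add: ray_image_def ray_factor_Tm)
  show "real_of_int (det B) = tmat_v B ^ 2 - N * tmat_u B ^ 2"
    using det_real_mat[of B] by (simp add: real_mat_eq_Tm[OF assms] det_Tm)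
qed

lemma qs2_dvd_mult_d1:
  assumes "preserves_ray \<alpha> B"
  shows "int q * int s ^ 2 dvd B$1$2 * d1"
proof -
  let ?b = "B$1$2"
  have "r * (2 * ?b) = - (int s * (B$1$1 - B$2$2))"
    using preserves_ray_entries(1)[OF assms] by (simp add: algebra_simps)
  then have "int s dvd r * (2 * ?b)"
    by simp
  moreover have "coprime (int s) r"
    using cop_rs by (simp add: coprime_iff_gcd_eq_1 gcd.commute)
  ultimately obtain t where t: "2 * ?b = int s * t"
    using coprime_dvd_mult_right_iff by blast
  have "?b * (2 * int q * int s) = int q * int s ^ 2 * t"
    using t by (simp add: power2_eq_square algebra_simps)
  then have "int q * int s ^ 2 dvd ?b * (2 * int q * int s)"
    by (metis dvd_triv_left)
  moreover have "int q * int s ^ 2 dvd ?b * (int p * int s ^ 2 - int q * r ^ 2)"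
    using preserves_ray_entries(2)[OF assms] by simp
  ultimately have "int q * int s ^ 2 dvd gcd (?b * (int p * int s ^ 2 - int q * r ^ 2)) (?b * (2 * int q * int s))"
    by simp
  also have "gcd (?b * (int p * int s ^ 2 - int q * r ^ 2)) (?b * (2 * int q * int s)) = \<bar>?b * d1\<bar>"
    using d1_pos by (simp add: gcd_mult_distrib_int d1_def d1f_def abs_mult)
  finally show ?thesis
    by simp
qed

lemma tmat_u_Ints:
  assumes "preserves_ray \<alpha> B"
  obtains U where "tmat_u B = real_of_int U" "B$1$2 * d1 = int q * int s ^ 2 * U"
proof -
  obtain U where U: "B$1$2 * d1 = int q * int s ^ 2 * U"
    using qs2_dvd_mult_d1[OF assms] by blast
  then have "real_of_int (B$1$2) * real_of_int d1 = real q * real s ^ 2 * real_of_int U"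
    using arg_cong[OF U, of real_of_int] by simp
  then have "tmat_u B = real_of_int U"
    using q_pos s_pos by (simp add: tmat_u_def field_simps)
  then show ?thesis
    using that U by blast
qed

lemma tmat_v_Ints:
  assumes "preserves_ray \<alpha> B" "d1 dvd int q * int s"
  shows "tmat_v B \<in> \<int>"
proof -
  obtain U where U: "B$1$2 * d1 = int q * int s ^ 2 * U"
    using tmat_u_Ints[OF assms(1)] by blast
  obtain w where w: "int q * int s = d1 * w"
    using assms(2) by blast
  have "int s * d1 * (B$1$1 - B$2$2) = d1 * (int s * (B$1$1 - B$2$2))"
    by (simp add: algebra_simps)
  also have "\<dots> = - 2 * r * (B$1$2 * d1)"
    unfolding preserves_ray_entries(1)[OF assms(1)] by (simp add: algebra_simps)
  also have "\<dots> = int s * d1 * (- 2 * r * U * w)"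
    using U w by (simp add: power2_eq_square algebra_simps)
  finally have "int s * d1 = 0 \<or> B$1$1 - B$2$2 = - 2 * r * U * w"
    by (simp only: mult_cancel_left)
  then have "B$1$1 - B$2$2 = - 2 * r * U * w"
    using s_pos d1_pos by auto
  then have "B$1$1 + B$2$2 = 2 * (B$2$2 - r * U * w)"
    by (simp add: algebra_simps)
  then have "real_of_int (B$1$1) + real_of_int (B$2$2) = 2 * real_of_int (B$2$2 - r * U * w)"
    by (metis of_int_add of_int_mult of_int_numeral)
  then have "tmat_v B = real_of_int (B$2$2 - r * U * w)"
    by (simp add: tmat_v_def)
  then show ?thesis
    by simp
qed

lemma tmat_pos_if_ray_factor_gt_1:
  assumes "B \<in> GL2Z" "preserves_ray \<alpha> B" "ray_factor \<alpha> B > 1"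
  shows "tmat_v B > 0" "real_of_int k * tmat_u B > 0"
proof -
  let ?v = "tmat_v B" and ?w = "real_of_int k * tmat_u B * \<rho>"
  have factor: "ray_factor \<alpha> B = ?v + ?w" and det: "real_of_int (det B) = ?v ^ 2 - N * tmat_u B ^ 2"
    using ray_factor_det_tmat[OF assms(2)] by simp_all
  have "(?v + ?w) * (?v - ?w) = real_of_int (det B)"
    unfolding det using k_square rho_square by (simp add: power2_eq_square algebra_simps)
  moreover have "\<bar>real_of_int (det B)\<bar> = 1"
    using assms(1) by (simp add: GL2Z_def)
  ultimately have "\<bar>ray_factor \<alpha> B * (?v - ?w)\<bar> = 1"
    using factor by simp
  moreover have "0 < ray_factor \<alpha> B"
    using assms(3) by simp
  ultimately have "ray_factor \<alpha> B * \<bar>?v - ?w\<bar> = 1"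
    by (simp only: abs_mult abs_of_pos)
  then have "\<bar>?v - ?w\<bar> = 1 / ray_factor \<alpha> B"
    using \<open>0 < ray_factor \<alpha> B\<close> by (simp add: field_simps)
  then have "\<bar>?v - ?w\<bar> < 1"
    using assms(3) by simp
  then have "?v > 0" "?w > 0"
    using assms(3) factor by linarith+
  then show "tmat_v B > 0" "real_of_int k * tmat_u B > 0"
    using rho_pos by (simp_all add: zero_less_mult_iff)
qed

lemma pell_solution_of_ray_unit:
  assumes "B \<in> GL2Z" "preserves_ray \<alpha> B" "ray_factor \<alpha> B > 1" "h > 0"
    and "real h * tmat_v B \<in> \<int>"
  obtains X Y where "X > 0" "Y > 0"
    "real_of_int X ^ 2 - (real h ^ 2 * N) * real_of_int Y ^ 2 = real_of_int (int h ^ 2 * det B)"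
    "ray_factor \<alpha> B = (real_of_int X + real_of_int Y * (real h * \<rho>)) / real h"
proof -
  obtain U where U: "tmat_u B = real_of_int U"
    using tmat_u_Ints[OF assms(2)] by blast
  obtain X where X: "real h * tmat_v B = real_of_int X"
    using assms(5) by (metis Ints_cases)
  have v: "tmat_v B > 0" and ku: "real_of_int k * tmat_u B > 0"
    using tmat_pos_if_ray_factor_gt_1[OF assms(1-3)] by simp_all
  define Y where "Y = \<bar>U\<bar>"
  have Y: "real_of_int Y = real_of_int k * tmat_u B"
    using ku k U by (auto simp: Y_def)
  have "real_of_int X > 0"
    unfolding X[symmetric] using v assms(4) by simp
  moreover have "real_of_int Y > 0"
    using Y ku by simp
  ultimately have "X > 0" "Y > 0"
    by simp_all
  moreover have "real_of_int X ^ 2 - (real h ^ 2 * N) * real_of_int Y ^ 2 = real_of_int (int h ^ 2 * det B)"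
  proof -
    have "real_of_int Y ^ 2 = tmat_u B ^ 2"
      using Y k_square by (simp add: power2_eq_square algebra_simps)
    moreover have "real_of_int X ^ 2 = real h ^ 2 * tmat_v B ^ 2"
      by (simp add: X[symmetric] power_mult_distrib)
    moreover have "tmat_v B ^ 2 = real_of_int (det B) + N * tmat_u B ^ 2"
      using ray_factor_det_tmat(2)[OF assms(2)] by simp
    ultimately show ?thesis
      by (simp add: algebra_simps)
  qed
  moreover have "ray_factor \<alpha> B = (real_of_int X + real_of_int Y * (real h * \<rho>)) / real h"
    using ray_factor_det_tmat(1)[OF assms(2)] X Y assms(4) by (simp add: field_simps)
  ultimately show ?thesis
    using that by blast
qed

lemma sqrt_scaled_N: "sqrt (real h ^ 2 * N) = real h * \<rho>"
  by (simp add: real_sqrt_mult sqrt_N)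

definition pell_matrix :: "int \<Rightarrow> int \<Rightarrow> nat \<Rightarrow> int^2^2" where
  "pell_matrix u x h = int_of_mat (Tm (real_of_int u) (real_of_int x / real h))"

lemma pell_matrix_properties:
  assumes "h = 1 \<or> h = 2"
    and "real_of_int x ^ 2 - (real h ^ 2 * N) * real_of_int u ^ 2 = real_of_int (int h ^ 2 * d)"
  shows "real_mat (pell_matrix u x h) = Tm (real_of_int u) (real_of_int x / real h)"
    and "det (pell_matrix u x h) = d"
    and "preserves_ray \<alpha> (pell_matrix u x h) \<longleftrightarrow> ray_factor \<alpha> (pell_matrix u x h) > 0"
    and "ray_factor \<alpha> (pell_matrix u x h)
           = (real_of_int x + real_of_int k * real_of_int u * (real h * \<rho>)) / real h"
proof -
  let ?T = "Tm (real_of_int u) (real_of_int x / real h)"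
  have "real h > 0"
    using assms(1) by auto
  have "(real_of_int x / real h) ^ 2 - N * real_of_int u ^ 2
      = (real_of_int x ^ 2 - (real h ^ 2 * N) * real_of_int u ^ 2) / real h ^ 2"
    using \<open>real h > 0\<close> by (simp add: power_divide field_simps)
  also have "\<dots> = real_of_int d"
    using assms(2) \<open>real h > 0\<close> by simp
  finally have det: "(real_of_int x / real h) ^ 2 - N * real_of_int u ^ 2 = real_of_int d" .
  moreover have "2 * (real_of_int x / real h) \<in> \<int>"
    using assms(1) by auto
  ultimately have "?T $i$j \<in> \<int>" for i j
    by (intro Tm_Ints) auto
  then show real_mat_eq: "real_mat (pell_matrix u x h) = ?T"
    unfolding pell_matrix_def by (rule real_mat_int_of_mat)
  have entries: "real_of_int (pell_matrix u x h $i$j) = ?T $i$j" for i j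
    using arg_cong[OF real_mat_eq, of "\<lambda>M. M$i$j"] by (simp add: real_mat_def)
  show "det (pell_matrix u x h) = d"
    using det_real_mat[of "pell_matrix u x h"] det by (simp add: real_mat_eq det_Tm)
  show "preserves_ray \<alpha> (pell_matrix u x h) \<longleftrightarrow> ray_factor \<alpha> (pell_matrix u x h) > 0"
    by (simp add: preserves_ray_def ray_image_def entries ray_image_2_Tm)
  have "ray_factor \<alpha> (pell_matrix u x h) = real_of_int x / real h + real_of_int k * real_of_int u * \<rho>"
    by (simp add: ray_image_def entries ray_factor_Tm)
  also have "\<dots> = (real_of_int x + real_of_int k * real_of_int u * (real h * \<rho>)) / real h"
    using \<open>real h > 0\<close> by (simp add: field_simps)
  finally show "ray_factor \<alpha> (pell_matrix u x h)
      = (real_of_int x + real_of_int k * real_of_int u * (real h * \<rho>)) / real h" .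
qed

lemma fundamental_solution_le_ray_factor:
  assumes "h > 0" "real h * tmat_v B \<in> \<int>" "B \<in> GL2Z" "preserves_ray \<alpha> B" "ray_factor \<alpha> B > 1"
    and "fundamental_solution (real h ^ 2 * N) (int h ^ 2 * det B) x1 y1"
  shows "(real_of_int x1 + real_of_int y1 * (real h * \<rho>)) / real h \<le> ray_factor \<alpha> B"
proof -
  obtain X Y where XY: "X > 0" "Y > 0"
    "real_of_int X ^ 2 - (real h ^ 2 * N) * real_of_int Y ^ 2 = real_of_int (int h ^ 2 * det B)"
    and factor: "ray_factor \<alpha> B = (real_of_int X + real_of_int Y * (real h * \<rho>)) / real h"
    using pell_solution_of_ray_unit[OF assms(3-5,1,2)] by blast
  have "real h ^ 2 * N > 0"
    using assms(1) N_pos by simp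
  from fundamental_solution_le[OF this assms(6) XY]
  have "real_of_int x1 + real_of_int y1 * (real h * \<rho>) \<le> real_of_int X + real_of_int Y * (real h * \<rho>)"
    by (simp add: sqrt_scaled_N)
  then show ?thesis
    unfolding factor using assms(1) by (simp add: divide_right_mono)
qed

lemma det_eq_1_if_no_negative_pell_solution:
  assumes "h > 0" "real h * tmat_v B \<in> \<int>" "\<not> has_int_solution (real h ^ 2 * N) (- (int h ^ 2))"
    and "B \<in> GL2Z" "preserves_ray \<alpha> B" "ray_factor \<alpha> B > 1"
  shows "det B = 1"
proof (rule ccontr)
  assume "det B \<noteq> 1"
  then have "det B = -1"
    using GL2Z_det_cases[OF assms(4)] by blast
  obtain X Y where "real_of_int X ^ 2 - (real h ^ 2 * N) * real_of_int Y ^ 2 = real_of_int (int h ^ 2 * det B)"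
    using pell_solution_of_ray_unit[OF assms(4-6,1,2)] by blast
  then show False
    using assms(3) \<open>det B = -1\<close> by (auto simp: has_int_solution_def)
qed

lemma isometric_automorphism_iff_power_no_negative:
  assumes h: "h = 1 \<or> h = 2" and v_Ints: "\<And>B. preserves_ray \<alpha> B \<Longrightarrow> real h * tmat_v B \<in> \<int>"
    and no_neg: "\<not> has_int_solution (real h ^ 2 * N) (- (int h ^ 2))"
    and fund: "fundamental_solution (real h ^ 2 * N) (int h ^ 2) x1 y1" and "A \<in> GL2Z"
  shows "isometric_automorphism \<alpha> A \<longleftrightarrow> is_int_power (real_mat A) (Tm (real_of_int y1) (real_of_int x1 / real h))"
proof -
  let ?T = "pell_matrix y1 x1 h"
  define \<epsilon> where "\<epsilon> = (real_of_int x1 + real_of_int y1 * (real h * \<rho>)) / real h"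
  have hpos: "real h > 0"
    using h by auto
  have sol: "real_of_int x1 ^ 2 - (real h ^ 2 * N) * real_of_int y1 ^ 2 = real_of_int (int h ^ 2 * 1)"
    and xy: "x1 > 0" "y1 > 0"
    using fund by (auto simp: fundamental_solution_def)
  note T = pell_matrix_properties[OF h sol]
  have "\<epsilon> > 1"
    using pell_unit_gt_1[of "real h ^ 2 * N" x1 y1 "real h"] N_pos hpos xy sol
    by (simp add: \<epsilon>_def sqrt_scaled_N)
  have "(real_of_int x1 - real_of_int y1 * (real h * \<rho>)) / real h = 1 / \<epsilon>"
    using pell_conjugate_unit[of "real h ^ 2 * N" x1 y1 "real h"] N_pos hpos xy sol
    by (simp add: \<epsilon>_def sqrt_scaled_N)
  then have factor: "ray_factor \<alpha> ?T = (if k = 1 then \<epsilon> else 1 / \<epsilon>)"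
    using T(4) k by (auto simp: \<epsilon>_def)
  then have Tray: "preserves_ray \<alpha> ?T"
    using T(3) \<open>\<epsilon> > 1\<close> by simp
  have TG: "?T \<in> GL2Z"
    using T(2) by (simp add: GL2Z_def)
  have "\<epsilon> \<le> ray_factor \<alpha> B" if "B \<in> GL2Z" "preserves_ray \<alpha> B" "ray_factor \<alpha> B > 1" for B
    using fundamental_solution_le_ray_factor[OF _ v_Ints[OF that(2)] that] fund hpos
      det_eq_1_if_no_negative_pell_solution[OF _ v_Ints[OF that(2)] no_neg that] by (simp add: \<epsilon>_def)
  then have "fundamental_ray_unit \<alpha> ?T \<or> fundamental_ray_unit \<alpha> (gl_inverse ?T)"
    using factor \<open>\<epsilon> > 1\<close> TG Tray preserves_ray_gl_inverse[OF TG Tray] gl_inverse_in_GL2Z[OF TG]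
    by (auto simp: fundamental_ray_unit_def)
  then show ?thesis
    using isometric_automorphism_iff_is_int_power[OF alpha_irr TG Tray _ \<open>A \<in> GL2Z\<close>]
    by (simp add: T(1))
qed

lemma isometric_automorphism_iff_power_negative:
  assumes h: "h = 1 \<or> h = 2" and v_Ints: "\<And>B. preserves_ray \<alpha> B \<Longrightarrow> real h * tmat_v B \<in> \<int>"
    and fund: "fundamental_solution (real h ^ 2 * N) (- (int h ^ 2)) x1 y1" and "A \<in> GL2Z"
  shows "isometric_automorphism \<alpha> A \<longleftrightarrow> is_int_power (real_mat A) (Tm (real_of_int (k * y1)) (real_of_int x1 / real h))"
proof -
  let ?T = "pell_matrix (k * y1) x1 h"
  define \<epsilon> where "\<epsilon> = (real_of_int x1 + real_of_int y1 * (real h * \<rho>)) / real h"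
  have hpos: "real h > 0"
    using h by auto
  have sol: "real_of_int x1 ^ 2 - (real h ^ 2 * N) * real_of_int y1 ^ 2 = - (real h ^ 2)" and xy: "x1 > 0" "y1 > 0"
    using fund by (auto simp: fundamental_solution_def)
  then have "real_of_int x1 ^ 2 - (real h ^ 2 * N) * real_of_int (k * y1) ^ 2 = real_of_int (int h ^ 2 * -1)"
    using k by (auto simp: power_mult_distrib)
  note T = pell_matrix_properties[OF h this]
  have "\<epsilon> > 1"
    using pell_unit_gt_1[of "real h ^ 2 * N" x1 y1 "real h"] N_pos hpos xy sol
    by (simp add: \<epsilon>_def sqrt_scaled_N)
  have TG: "?T \<in> GL2Z" and factor: "ray_factor \<alpha> ?T = \<epsilon>"
    using T(2,4) k_square by (simp_all add: GL2Z_def \<epsilon>_def mult.assoc[symmetric])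
  have Tray: "preserves_ray \<alpha> ?T"
    using T(3) factor \<open>\<epsilon> > 1\<close> by simp
  have "\<epsilon> \<le> ray_factor \<alpha> B"
    if "B \<in> GL2Z" "preserves_ray \<alpha> B" "ray_factor \<alpha> B > 1" "det B = -1" for B
    using fundamental_solution_le_ray_factor[OF _ v_Ints[OF that(2)] that(1-3)] that(4) fund hpos
    by (simp add: \<epsilon>_def)
  then have "fundamental_ray_unit \<alpha> ?T"
    using fundamental_ray_unit_if_least_with_det_minus_1[OF TG Tray] T(2) factor \<open>\<epsilon> > 1\<close> by simp
  then show ?thesis
    using isometric_automorphism_iff_is_int_power[OF alpha_irr TG Tray _ \<open>A \<in> GL2Z\<close>] by (simp add: T(1))
qed

end

theorem mainTheorem17:
  fixes r k :: int and p q s :: nat and \<alpha> :: real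
  assumes alpha_def: "\<alpha> = real_of_int r / real s + real_of_int k * sqrt (real p / real q)"
    and alpha_pos: "\<alpha> > 0" and alpha_irr: "\<alpha> \<notin> \<rat>"
    and k: "k \<in> {-1, 1}" and s_pos: "s > 0" and q_pos: "q > 0" and s_even: "even s"
    and cop_rs: "gcd r (int s) = 1" and cop_pq: "gcd p q = 1"
  defines "d1 \<equiv> d1f p q r s"
    and "N \<equiv> real p * real q * real s ^ 4 / real_of_int (d1f p q r s) ^ 2"
    and "M \<equiv> 4 * real p * real q * real s ^ 4 / real_of_int (d1f p q r s) ^ 2"
    and "T \<equiv> Tmat (real p) (real q) (real_of_int r) (real s) (real_of_int (d1f p q r s))"
  assumes A: "A \<in> GL2Z"
  shows
    "(d1 dvd int q * int s \<longrightarrow> \<not> has_int_solution N (-1) \<longrightarrow>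
        (\<forall>x1 y1. fundamental_solution N 1 x1 y1 \<longrightarrow>
          (isometric_automorphism \<alpha> A \<longleftrightarrow>
             is_int_power (real_mat A) (T (real_of_int y1) (real_of_int x1))))) \<and>
     (d1 dvd int q * int s \<longrightarrow> has_int_solution N (-1) \<longrightarrow>
        (\<forall>x1 y1. fundamental_solution N (-1) x1 y1 \<longrightarrow>
          (isometric_automorphism \<alpha> A \<longleftrightarrow>
             is_int_power (real_mat A) (T (real_of_int (k * y1)) (real_of_int x1))))) \<and>
     (\<not> d1 dvd int q * int s \<longrightarrow> \<not> has_int_solution M (-4) \<longrightarrow>
        (\<forall>x1 y1. fundamental_solution M 4 x1 y1 \<longrightarrow>
          (isometric_automorphism \<alpha> A \<longleftrightarrow>
             is_int_power (real_mat A) (T (real_of_int y1) (real_of_int x1 / 2))))) \<and>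
     (\<not> d1 dvd int q * int s \<longrightarrow> has_int_solution M (-4) \<longrightarrow>
        (\<forall>x1 y1. fundamental_solution M (-4) x1 y1 \<longrightarrow>
          (isometric_automorphism \<alpha> A \<longleftrightarrow>
             is_int_power (real_mat A) (T (real_of_int (k * y1)) (real_of_int x1 / 2)))))"
proof -
  interpret qa: quadratic_alpha r k p q s \<alpha>
    using alpha_def alpha_irr k s_pos q_pos s_even cop_rs by unfold_locales
  have d1: "d1 = qa.d1" and T: "T = qa.Tm" and N: "N = real 1 ^ 2 * qa.N" and M: "M = real 2 ^ 2 * qa.N"
    by (simp_all add: d1_def T_def N_def M_def qa.d1_def qa.N_def)
  have v1: "real 1 * qa.tmat_v B \<in> \<int>" if "d1 dvd int q * int s" "preserves_ray \<alpha> B" for B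
    using qa.tmat_v_Ints that by (simp add: d1)
  have v2: "real 2 * qa.tmat_v B \<in> \<int>" for B
  proof -
    have "real 2 * qa.tmat_v B = real_of_int (B$1$1 + B$2$2)"
      by (simp add: qa.tmat_v_def)
    then show ?thesis
      by simp
  qed
  show ?thesis
    using qa.isometric_automorphism_iff_power_no_negative[of 1, OF _ v1 _ _ A]
      qa.isometric_automorphism_iff_power_negative[of 1, OF _ v1 _ A]
      qa.isometric_automorphism_iff_power_no_negative[of 2, OF _ v2 _ _ A]
      qa.isometric_automorphism_iff_power_negative[of 2, OF _ v2 _ A]
    by (simp add: N M T)
qed

end
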